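(* The class $\mathcal S^*$ has the expansion property relative to the class $\mathcal S$.
   Context: Expansion property: let $L\subseteq L^*$ be relational languages, $\mathcal K$ a class of finite $L$-structures and $\mathcal K^*$ a class of finite $L^*$-structures whose $L$-reducts lie in $\mathcal K$. $\mathcal K^*$ has the expansion property relative to $\mathcal K$ if for every $\mathbf A\in\mathcal K$ there is $\mathbf B\in\mathcal K$ such that for all $\mathbf A^*,\mathbf B^*\in\mathcal K^*$ whose $L$-reducts are $\mathbf A$ and $\mathbf B$ respectively, $\mathbf A^*$ embeds into $\mathbf B^*$. A directed graph $(A,E)$ is complete multipartite if the relation "$u=v$, or neither $E(u,v)$ nor $E(v,u)$" is an equivalence relation on $A$; its classes are the parts. $\mathcal S$ is the class of finite complete multipartite directed graphs satisfying the parity constraint: for any two distinct parts $P,P'$, distinct $u,v\in P$ and distinct $x,y\in P'$, the number of edges directed from $\{u,v\}$ to $\{x,y\}$ is even. $\mathcal S^*$ is the class of structures $(A,E,R,<)$ ($R,<$ binary) obtained as follows: $\mathbf A=(A,E)\in\mathcal S$ has $k$ parts; choose $\bar{\mathbf A}=(\bar A,\bar E)\in\mathcal S$ with $k$ parts, containing $\mathbf A$ as an induced substructure, and containing a set $\{t_0,\dots,t_{k-1}\}$ disjoint from $A$ with exactly one $t_i$ in each part of $\bar{\mathbf A}$ and $\bar E(t_i,t_j)$ whenever $i<j$; set $R(x,u)$ iff $x,u\in A$ lie in different parts and $\bar E(t,u)$, where $t$ is the $t_i$ lying in the part of $x$; and let $<$ be the restriction to $A$ of a linear order on $\bar A$ in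 which every part of $\bar{\mathbf A}$ is an interval and $t_0<t_1<\dots<t_{k-1}$. *)

theory Defs
  imports Main
begin

text \<open>Structures live on finite subsets of nat (every finite structure has an
isomorphic copy there). Relations are sets of pairs over the carrier.\<close>

definition digraph :: "nat set \<Rightarrow> (nat \<times> nat) set \<Rightarrow> bool" where
  "digraph A E \<longleftrightarrow> E \<subseteq> A \<times> A \<and> (\<forall>x. (x, x) \<notin> E) \<and> (\<forall>x y. (x, y) \<in> E \<longrightarrow> (y, x) \<notin> E)"

definition same_part :: "(nat \<times> nat) set \<Rightarrow> nat \<Rightarrow> nat \<Rightarrow> bool" where
  "same_part E u v \<longleftrightarrow> u = v \<or> ((u, v) \<notin> E \<and> (v, u) \<notin> E)"

definition part_rel :: "nat set \<Rightarrow> (nat \<times> nat) set \<Rightarrow> (nat \<times> nat) set" where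
  "part_rel A E = {(u, v). u \<in> A \<and> v \<in> A \<and> same_part E u v}"

definition complete_multipartite :: "nat set \<Rightarrow> (nat \<times> nat) set \<Rightarrow> bool" where
  "complete_multipartite A E \<longleftrightarrow> digraph A E \<and> equiv A (part_rel A E)"

definition parts :: "nat set \<Rightarrow> (nat \<times> nat) set \<Rightarrow> nat set set" where
  "parts A E = A // part_rel A E"

definition parity_ok :: "nat set \<Rightarrow> (nat \<times> nat) set \<Rightarrow> bool" where
  "parity_ok A E \<longleftrightarrow>
     (\<forall>P \<in> parts A E. \<forall>P' \<in> parts A E. P \<noteq> P' \<longrightarrow>
        (\<forall>u \<in> P. \<forall>v \<in> P. \<forall>x \<in> P'. \<forall>y \<in> P'. u \<noteq> v \<longrightarrow> x \<noteq> y \<longrightarrow>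
           even (card {(a, b). a \<in> {u, v} \<and> b \<in> {x, y} \<and> (a, b) \<in> E})))"

definition in_S :: "nat set \<Rightarrow> (nat \<times> nat) set \<Rightarrow> bool" where
  "in_S A E \<longleftrightarrow> finite A \<and> complete_multipartite A E \<and> parity_ok A E"

definition strict_linorder_on :: "nat set \<Rightarrow> (nat \<times> nat) set \<Rightarrow> bool" where
  "strict_linorder_on X Ord \<longleftrightarrow> Ord \<subseteq> X \<times> X \<and> (\<forall>x. (x, x) \<notin> Ord) \<and>
     (\<forall>x y z. (x, y) \<in> Ord \<longrightarrow> (y, z) \<in> Ord \<longrightarrow> (x, z) \<in> Ord) \<and>
     (\<forall>x \<in> X. \<forall>y \<in> X. x \<noteq> y \<longrightarrow> (x, y) \<in> Ord \<or> (y, x) \<in> Ord)"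

definition in_Sstar :: "nat set \<Rightarrow> (nat \<times> nat) set \<Rightarrow> (nat \<times> nat) set \<Rightarrow> (nat \<times> nat) set \<Rightarrow> bool" where
  "in_Sstar A E R Lt \<longleftrightarrow> in_S A E \<and>
    (\<exists>Ab Eb (t :: nat \<Rightarrow> nat) Ob. let k = card (parts A E) in
       in_S Ab Eb \<and> A \<subseteq> Ab \<and> E = Eb \<inter> (A \<times> A) \<and> card (parts Ab Eb) = k \<and>
       (\<forall>i < k. t i \<in> Ab - A) \<and>
       (\<forall>P \<in> parts Ab Eb. \<exists>!i. i < k \<and> t i \<in> P) \<and>
       (\<forall>i j. i < j \<and> j < k \<longrightarrow> (t i, t j) \<in> Eb) \<and>
       R = {(x, u). x \<in> A \<and> u \<in> A \<and> \<not> same_part Eb x u \<and>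
                    (\<exists>i < k. same_part Eb (t i) x \<and> (t i, u) \<in> Eb)} \<and>
       strict_linorder_on Ab Ob \<and>
       (\<forall>P \<in> parts Ab Eb. \<forall>a \<in> P. \<forall>c \<in> P. \<forall>b \<in> Ab. (a, b) \<in> Ob \<and> (b, c) \<in> Ob \<longrightarrow> b \<in> P) \<and>
       (\<forall>i j. i < j \<and> j < k \<longrightarrow> (t i, t j) \<in> Ob) \<and>
       Lt = Ob \<inter> (A \<times> A))"

definition embeds_star ::
  "nat set \<Rightarrow> (nat \<times> nat) set \<Rightarrow> (nat \<times> nat) set \<Rightarrow> (nat \<times> nat) set \<Rightarrow>
   nat set \<Rightarrow> (nat \<times> nat) set \<Rightarrow> (nat \<times> nat) set \<Rightarrow> (nat \<times> nat) set \<Rightarrow> bool" where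
  "embeds_star A E R Lt B F R' Lt' \<longleftrightarrow>
    (\<exists>f. f ` A \<subseteq> B \<and> inj_on f A \<and>
      (\<forall>x \<in> A. \<forall>y \<in> A.
         ((x, y) \<in> E \<longleftrightarrow> (f x, f y) \<in> F) \<and>
         ((x, y) \<in> R \<longleftrightarrow> (f x, f y) \<in> R') \<and>
         ((x, y) \<in> Lt \<longleftrightarrow> (f x, f y) \<in> Lt')))"

definition Sstar_expansion_property :: bool where
  "Sstar_expansion_property \<longleftrightarrow>
    (\<forall>A E. in_S A E \<longrightarrow>
      (\<exists>B F. in_S B F \<and>
        (\<forall>R Lt R' Lt'. in_Sstar A E R Lt \<longrightarrow> in_Sstar B F R' Lt' \<longrightarrow>
           embeds_star A E R Lt B F R' Lt')))"

end

theory Submission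
  imports Defs "HOL-Library.Ramsey" "HOL-Library.Nat_Bijection"
begin

text \<open>
  A structure of \<open>\<S>\<close> with \<open>k\<close> parts is embedded into a universal structure \<open>U\<^sub>N\<close>, whose vertices are
  pairs \<open>(p, W)\<close> of a part \<open>p < N\<close> and a label \<open>W \<subseteq> {..<N}\<close>; the label of a vertex flips the
  direction of its edges towards part \<open>q\<close> exactly when \<open>q \<in> W\<close>.
  In every \<open>\<S>\<^sup>*\<close>-expansion the parts are intervals of the order, \<open>R\<close> depends only on the part of
  its first argument and, by the parity condition, changes inside a part exactly when the edges do, and
  the order together with \<open>R\<close> determines \<open>E\<close>. So to embed an expansion of \<open>A\<close> into a given expansion
  of \<open>U\<^sub>N\<close> it suffices to find \<open>k\<close> parts \<open>C\<close> of \<open>U\<^sub>N\<close> (matched with the parts of \<open>A\<close> in order)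
  and, for every \<open>x \<in> A\<close>, a label that produces the required \<open>R\<close>-pattern on \<open>C\<close> and has the right
  position among the labels of its part. Cutting the ranking of the \<open>2\<^sup>N\<close> labels of part \<open>q\<close> into
  \<open>2\<^sup>e\<close> blocks of consecutive ranks, it is enough that every block of every \<open>q \<in> C\<close> shatters
  \<open>C - {q}\<close>. Two applications of Ramsey's theorem reduce this to counting: a block has \<open>2\<^bsup>N-e\<^esup>\<close>
  members, hence at least \<open>2\<^bsup>2h-e\<^esup>\<close> traces on a set of size \<open>2h\<close>, hence by Pajor's lemma it
  shatters at least as many subsets of that set; this exceeds the number of subsets that meet one of
  its two halves in too few points.
\<close>

section \<open>Ranks in finite linear orders\<close>

definition order_rank :: "'a rel \<Rightarrow> 'a set \<Rightarrow> 'a \<Rightarrow> nat" where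
  "order_rank r X x = card {y \<in> X. (y, x) \<in> r}"

lemma order_rank_less_iff:
  assumes "finite X" "strict_linear_order_on X r" "x \<in> X" "y \<in> X"
  shows "order_rank r X x < order_rank r X y \<longleftrightarrow> (x, y) \<in> r"
proof -
  have less: "order_rank r X u < order_rank r X v" if "u \<in> X" "(u, v) \<in> r" "v \<in> X" for u v
    unfolding order_rank_def
  proof (rule psubset_card_mono)
    have "trans r" "irrefl r" using assms(2) by (auto simp: strict_linear_order_on_def)
    then show "{z \<in> X. (z, u) \<in> r} \<subset> {z \<in> X. (z, v) \<in> r}"
      using that by (auto simp: irrefl_def dest: transD)
  qed (use assms(1) in simp)
  have "total_on X r" using assms(2) by (simp add: strict_linear_order_on_def)
  then have "(x, y) \<in> r \<or> x = y \<or> (y, x) \<in> r"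
    using assms(3,4) by (auto simp: total_on_def)
  then show ?thesis
    using less[of x y] less[of y x] assms(3,4) by auto
qed

lemma bij_betw_order_rank:
  assumes "finite X" "strict_linear_order_on X r"
  shows "bij_betw (order_rank r X) X {..<card X}"
proof -
  have "inj_on (order_rank r X) X"
    using order_rank_less_iff[OF assms] assms(2)
    by (intro inj_onI) (metis less_irrefl strict_linear_order_on_def total_on_def)
  moreover have "order_rank r X x < card X" if "x \<in> X" for x
    unfolding order_rank_def using assms that
    by (intro psubset_card_mono) (auto simp: strict_linear_order_on_def irrefl_def)
  ultimately have "order_rank r X ` X = {..<card X}"
    by (intro card_subset_eq) (auto simp: card_image)
  with \<open>inj_on (order_rank r X) X\<close> show ?thesis
    by (simp add: bij_betw_def)
qed

lemma strict_linear_order_on_subset: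
  "strict_linear_order_on X r \<Longrightarrow> Y \<subseteq> X \<Longrightarrow> strict_linear_order_on Y r"
  by (auto simp: strict_linear_order_on_def intro: total_on_subset)

lemma strict_linear_order_on_inv_image:
  assumes "strict_linear_order_on (f ` X) r" "inj_on f X"
  shows "strict_linear_order_on X (inv_image r f)"
  using assms unfolding strict_linear_order_on_def
  by (simp add: trans_inv_image irrefl_def total_on_def inj_on_def) blast

lemma strict_linorder_on_imp_strict_linear_order_on:
  "strict_linorder_on X r \<Longrightarrow> strict_linear_order_on X r"
  unfolding strict_linorder_on_def strict_linear_order_on_def
  by (auto simp: irrefl_def total_on_def intro: transI)

lemma strict_linear_order_on_less_than: "strict_linear_order_on X less_than"
  by (simp add: strict_linear_order_on_def irrefl_less_than)

lemma order_rank_less_than: "order_rank less_than X = (\<lambda>x. card {y \<in> X. y < x})"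
  by (simp add: fun_eq_iff order_rank_def)

lemma finite_linear_orders_isomorphic:
  assumes X: "finite X" "strict_linear_order_on X r" and Y: "finite Y" "strict_linear_order_on Y s"
    and "card X = card Y"
  obtains f where "bij_betw f X Y" "\<And>x y. x \<in> X \<Longrightarrow> y \<in> X \<Longrightarrow> (f x, f y) \<in> s \<longleftrightarrow> (x, y) \<in> r"
proof
  let ?f = "inv_into Y (order_rank s Y) \<circ> order_rank r X"
  have bX: "bij_betw (order_rank r X) X {..<card Y}" using bij_betw_order_rank[OF X] assms(5) by simp
  have bY: "bij_betw (inv_into Y (order_rank s Y)) {..<card Y} Y"
    using bij_betw_inv_into[OF bij_betw_order_rank[OF Y]] .
  show "bij_betw ?f X Y" using bij_betw_trans[OF bX bY] .
  fix x y assume "x \<in> X" "y \<in> X"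
  moreover have "order_rank s Y (?f z) = order_rank r X z" if "z \<in> X" for z
  proof -
    have "order_rank r X z \<in> order_rank s Y ` Y"
      using that bX bij_betw_order_rank[OF Y] by (auto simp: bij_betw_def)
    then show ?thesis by (simp add: f_inv_into_f)
  qed
  ultimately show "(?f x, ?f y) \<in> s \<longleftrightarrow> (x, y) \<in> r"
    using order_rank_less_iff[OF X] order_rank_less_iff[OF Y]
      bij_betwE[OF bij_betw_trans[OF bX bY]] by metis
qed

lemma card_bij_betw_lessThan_below:
  assumes "bij_betw f A {..<n}" "m \<le> n"
  shows "card {x \<in> A. f x < m} = m"
proof -
  have "inj_on f {x \<in> A. f x < m}" using assms(1) by (auto simp: bij_betw_def intro: inj_on_subset)
  moreover have "{..<m} \<subseteq> f ` A" using assms by (auto simp: bij_betw_def)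
  then have "f ` {x \<in> A. f x < m} = {..<m}" by auto
  ultimately show ?thesis by (metis card_image card_lessThan)
qed

lemma card_bij_betw_lessThan_above:
  assumes "bij_betw f A {..<n}" "m \<le> n"
  shows "card {x \<in> A. m \<le> f x} = n - m"
proof -
  have "finite A" "card A = n" using assms(1) by (auto simp: bij_betw_finite bij_betw_same_card)
  moreover have "{x \<in> A. m \<le> f x} = A - {x \<in> A. f x < m}" by auto
  ultimately show ?thesis using card_bij_betw_lessThan_below[OF assms] by (simp add: card_Diff_subset)
qed

section \<open>Shattering\<close>

definition shatters :: "'a set set \<Rightarrow> 'a set \<Rightarrow> bool" where
  "shatters J Y \<longleftrightarrow> (\<forall>T \<subseteq> Y. \<exists>W \<in> J. W \<inter> Y = T)"

lemma shatters_subset: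
  assumes "shatters J Y" "Y' \<subseteq> Y"
  shows "shatters J Y'"
  unfolding shatters_def
proof (intro allI impI)
  fix T assume "T \<subseteq> Y'"
  with assms(2) have "T \<subseteq> Y" by blast
  then obtain W where "W \<in> J" "W \<inter> Y = T"
    using assms(1) unfolding shatters_def by blast
  then have "W \<inter> Y' = T" using \<open>T \<subseteq> Y'\<close> assms(2) by blast
  with \<open>W \<in> J\<close> show "\<exists>W \<in> J. W \<inter> Y' = T" by blast
qed

lemma shatters_by_traces:
  assumes "shatters J' Y" "\<And>W'. W' \<in> J' \<Longrightarrow> \<exists>W \<in> J. W \<inter> Y = W' \<inter> Y"
  shows "shatters J Y"
  unfolding shatters_def
proof (intro allI impI)
  fix T assume "T \<subseteq> Y"
  then obtain W' where "W' \<in> J'" "W' \<inter> Y = T" using assms(1) unfolding shatters_def by blast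
  with assms(2) show "\<exists>W \<in> J. W \<inter> Y = T" by metis
qed

lemma shatters_insert:
  assumes "shatters J' Y" "\<And>W. W \<in> J' \<Longrightarrow> W \<in> J \<and> insert x W \<in> J \<and> x \<notin> W"
  shows "shatters J (insert x Y)"
  unfolding shatters_def
proof (intro allI impI)
  fix T assume T: "T \<subseteq> insert x Y"
  then have "T - {x} \<subseteq> Y" by blast
  then obtain W where W: "W \<in> J'" "W \<inter> Y = T - {x}"
    using assms(1) unfolding shatters_def by blast
  show "\<exists>W \<in> J. W \<inter> insert x Y = T"
  proof (cases "x \<in> T")
    case True
    then have "insert x W \<inter> insert x Y = T" using W T by auto
    then show ?thesis using assms(2) W(1) by blast
  next
    case False
    then have "W \<inter> insert x Y = T" using W T assms(2) by auto
    then show ?thesis using assms(2) W(1) by blast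
  qed
qed

lemma card_split_by_element:
  assumes "finite J"
  shows "card J = card {W \<in> J. x \<notin> W} + card {W. x \<notin> W \<and> insert x W \<in> J}"
proof -
  have "bij_betw (insert x) {W. x \<notin> W \<and> insert x W \<in> J} {W \<in> J. x \<in> W}"
    by (rule bij_betw_byWitness[where f' = "\<lambda>W. W - {x}"]) (auto simp: insert_absorb)
  then have "card {W \<in> J. x \<in> W} = card {W. x \<notin> W \<and> insert x W \<in> J}"
    by (simp add: bij_betw_same_card)
  moreover have "J = {W \<in> J. x \<notin> W} \<union> {W \<in> J. x \<in> W}" "{W \<in> J. x \<notin> W} \<inter> {W \<in> J. x \<in> W} = {}"
    by blast+
  ultimately show ?thesis using assms by (metis card_Un_disjoint finite_Un)
qed

lemma shatters_split_by_element:
  fixes J :: "'a set set" and x :: 'a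
  defines "J0 \<equiv> {W \<in> J. x \<notin> W}" and "J1 \<equiv> {W. x \<notin> W \<and> insert x W \<in> J}"
  assumes "x \<notin> Y"
  shows "shatters (J0 \<union> J1) Y \<Longrightarrow> shatters J Y"
    and "shatters (J0 \<inter> J1) Y \<Longrightarrow> shatters J (insert x Y)"
proof -
  show "shatters J Y" if "shatters (J0 \<union> J1) Y"
  proof (rule shatters_by_traces[OF that])
    show "\<exists>W \<in> J. W \<inter> Y = W' \<inter> Y" if "W' \<in> J0 \<union> J1" for W'
      using that assms(3) unfolding J0_def J1_def by (metis (lifting) Int_insert_left_if0 Un_iff mem_Collect_eq)
  qed
  show "shatters J (insert x Y)" if "shatters (J0 \<inter> J1) Y"
    using that by (rule shatters_insert) (auto simp: J0_def J1_def)
qed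

lemma card_le_card_shattered:
  assumes "finite X" "J \<subseteq> Pow X"
  shows "card J \<le> card {Y. Y \<subseteq> X \<and> shatters J Y}"
  using assms
proof (induction X arbitrary: J rule: finite_induct)
  case empty
  have "{Y. Y \<subseteq> {} \<and> shatters J Y} = {{}}" if "J = {{}}"
    using that by (auto simp: shatters_def)
  moreover have "J = {} \<or> J = {{}}" using empty by auto
  ultimately show ?case by fastforce
next
  case (insert x X)
  define J0 where "J0 = {W \<in> J. x \<notin> W}"
  define J1 where "J1 = {W. x \<notin> W \<and> insert x W \<in> J}"
  define Sh where "Sh K = {Y. Y \<subseteq> X \<and> shatters K Y}" for K
  have J01: "J0 \<subseteq> Pow X" "J1 \<subseteq> Pow X" using insert.prems by (auto simp: J0_def J1_def)
  have "finite J" using insert.prems insert.hyps(1) by (meson finite_Pow_iff finite_insert finite_subset)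
  have "Sh K \<subseteq> Pow X" for K unfolding Sh_def by blast
  then have fin: "finite J0" "finite J1" "finite (Sh K)" for K
    using J01 insert.hyps(1) by (meson finite_Pow_iff finite_subset)+
  have notin: "x \<notin> Y" if "Y \<in> Sh K" for Y K using that insert.hyps(2) unfolding Sh_def by blast
  have inj: "inj_on (insert x) (Sh K)" for K
  proof (rule inj_onI)
    fix Y Y' assume "Y \<in> Sh K" "Y' \<in> Sh K" "insert x Y = insert x Y'"
    then show "Y = Y'" using notin by (metis Diff_insert_absorb)
  qed
  have "card J = card (J0 \<union> J1) + card (J0 \<inter> J1)"
    using card_split_by_element[OF \<open>finite J\<close>, of x] card_Un_Int[OF fin(1,2)]
    unfolding J0_def J1_def by simp
  also have "\<dots> \<le> card (Sh (J0 \<union> J1)) + card (insert x ` Sh (J0 \<inter> J1))"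
  proof -
    have "card (J0 \<union> J1) \<le> card (Sh (J0 \<union> J1))" "card (J0 \<inter> J1) \<le> card (Sh (J0 \<inter> J1))"
      unfolding Sh_def using J01 by (intro insert.IH; blast)+
    then show ?thesis using card_image[OF inj] by simp
  qed
  also have "\<dots> = card (Sh (J0 \<union> J1) \<union> insert x ` Sh (J0 \<inter> J1))"
    using insert.hyps(2) fin(3) by (intro card_Un_disjoint[symmetric]) (auto simp: Sh_def)
  also have "\<dots> \<le> card {Y. Y \<subseteq> insert x X \<and> shatters J Y}"
  proof (rule card_mono)
    show "finite {Y. Y \<subseteq> insert x X \<and> shatters J Y}"
      using insert.hyps(1) by (auto intro: finite_subset[of _ "Pow (insert x X)"])
    have "shatters J Y" if "Y \<in> Sh (J0 \<union> J1)" for Y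
      using shatters_split_by_element(1)[OF notin[OF that]] that unfolding Sh_def J0_def J1_def by blast
    moreover have "shatters J (insert x Y)" if "Y \<in> Sh (J0 \<inter> J1)" for Y
      using shatters_split_by_element(2)[OF notin[OF that]] that unfolding Sh_def J0_def J1_def by blast
    ultimately show "Sh (J0 \<union> J1) \<union> insert x ` Sh (J0 \<inter> J1) \<subseteq> {Y. Y \<subseteq> insert x X \<and> shatters J Y}"
      unfolding Sh_def by blast
  qed
  finally show ?case .
qed

section \<open>Blocks of rankings shattering a common set\<close>

lemma binomial_le_Suc_pow: "n choose k \<le> (n + 1) ^ k"
proof (cases "k \<le> n")
  case True
  then have "n choose k \<le> n ^ k" by (rule binomial_le_pow)
  also have "\<dots> \<le> (n + 1) ^ k" by (rule power_mono) auto
  finally show ?thesis .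
qed (simp add: binomial_eq_0)

lemma card_subsets_card_less:
  assumes "finite X"
  shows "card {Z. Z \<subseteq> X \<and> card Z < a} \<le> a * (card X + 1) ^ a"
proof -
  have "{Z. Z \<subseteq> X \<and> card Z < a} \<subseteq> (\<Union>j<a. nsets X j)"
    using assms by (auto simp: nsets_def intro: finite_subset)
  then have "card {Z. Z \<subseteq> X \<and> card Z < a} \<le> card (\<Union>j<a. nsets X j)"
    using assms by (intro card_mono) (auto simp: finite_imp_finite_nsets)
  also have "\<dots> \<le> (\<Sum>j<a. card X choose j)"
    using card_UN_le[of "{..<a}" "nsets X"] by simp
  also have "\<dots> \<le> (\<Sum>j<a. (card X + 1) ^ a)"
  proof (rule sum_mono)
    fix j assume "j \<in> {..<a}"
    then have "(card X + 1) ^ j \<le> (card X + 1) ^ a" by (intro power_increasing) auto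
    then show "card X choose j \<le> (card X + 1) ^ a" using binomial_le_Suc_pow le_trans by blast
  qed
  finally show ?thesis by simp
qed

lemma card_subsets_small_trace:
  assumes "finite X1" "finite X2"
  shows "card {Y. Y \<subseteq> X1 \<union> X2 \<and> card (Y \<inter> X1) < a} \<le> a * (card X1 + 1) ^ a * 2 ^ card X2"
proof -
  define Small where "Small = {Z. Z \<subseteq> X1 \<and> card Z < a}"
  have "finite Small" unfolding Small_def using assms(1) by (auto intro: finite_subset[of _ "Pow X1"])
  have "{Y. Y \<subseteq> X1 \<union> X2 \<and> card (Y \<inter> X1) < a} \<subseteq> (\<lambda>(Z, Z'). Z \<union> Z') ` (Small \<times> Pow X2)"
  proof
    fix Y assume Y: "Y \<in> {Y. Y \<subseteq> X1 \<union> X2 \<and> card (Y \<inter> X1) < a}"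
    then have "(Y \<inter> X1, Y \<inter> X2) \<in> Small \<times> Pow X2" unfolding Small_def by auto
    moreover have "Y = (Y \<inter> X1) \<union> (Y \<inter> X2)" using Y by auto
    ultimately show "Y \<in> (\<lambda>(Z, Z'). Z \<union> Z') ` (Small \<times> Pow X2)"
      by (intro image_eqI[of _ _ "(Y \<inter> X1, Y \<inter> X2)"]) simp_all
  qed
  moreover have fin: "finite (Small \<times> Pow X2)" using \<open>finite Small\<close> assms(2) by simp
  ultimately have "card {Y. Y \<subseteq> X1 \<union> X2 \<and> card (Y \<inter> X1) < a} \<le> card ((\<lambda>(Z, Z'). Z \<union> Z') ` (Small \<times> Pow X2))"
    by (intro card_mono finite_imageI)
  also have "\<dots> \<le> card (Small \<times> Pow X2)" using fin by (rule card_image_le)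
  also have "\<dots> = card Small * 2 ^ card X2" using assms(2) by (simp add: card_cartesian_product card_Pow)
  also have "\<dots> \<le> a * (card X1 + 1) ^ a * 2 ^ card X2"
    unfolding Small_def using card_subsets_card_less[OF assms(1)] by simp
  finally show ?thesis .
qed

lemma card_unbalanced_subsets:
  assumes "finite X1" "finite X2" "card X1 = h" "card X2 = h" "a \<le> s" "b \<le> s"
  shows "card {Y. Y \<subseteq> X1 \<union> X2 \<and> (card (Y \<inter> X1) < a \<or> card (Y \<inter> X2) < b)}
    \<le> 2 * s * (h + 1) ^ s * 2 ^ h"
proof -
  have bound: "c * (h + 1) ^ c \<le> s * (h + 1) ^ s" if "c \<le> s" for c
    using that by (intro mult_mono power_increasing) auto
  have "{Y. Y \<subseteq> X1 \<union> X2 \<and> (card (Y \<inter> X1) < a \<or> card (Y \<inter> X2) < b)} =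
    {Y. Y \<subseteq> X1 \<union> X2 \<and> card (Y \<inter> X1) < a} \<union> {Y. Y \<subseteq> X2 \<union> X1 \<and> card (Y \<inter> X2) < b}"
    by auto
  then have "card {Y. Y \<subseteq> X1 \<union> X2 \<and> (card (Y \<inter> X1) < a \<or> card (Y \<inter> X2) < b)} \<le>
    card {Y. Y \<subseteq> X1 \<union> X2 \<and> card (Y \<inter> X1) < a} + card {Y. Y \<subseteq> X2 \<union> X1 \<and> card (Y \<inter> X2) < b}"
    by (simp add: card_Un_le)
  also have "\<dots> \<le> a * (h + 1) ^ a * 2 ^ h + b * (h + 1) ^ b * 2 ^ h"
    using card_subsets_small_trace[OF assms(1,2), of a] card_subsets_small_trace[OF assms(2,1), of b] assms(3,4)
    by simp
  also have "\<dots> \<le> s * (h + 1) ^ s * 2 ^ h + s * (h + 1) ^ s * 2 ^ h"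
    using bound[OF assms(5)] bound[OF assms(6)] by (intro add_mono mult_right_mono) auto
  finally show ?thesis by simp
qed

lemma card_le_card_traces:
  assumes "finite U" "J \<subseteq> Pow U" "X \<subseteq> U"
  shows "card J \<le> card ((\<lambda>W. W \<inter> X) ` J) * 2 ^ card (U - X)"
proof -
  define P where "P = (\<lambda>W. W \<inter> X) ` J"
  have "finite P" unfolding P_def using assms by (meson finite_Pow_iff finite_imageI finite_subset)
  have "J \<subseteq> (\<Union>Z\<in>P. (\<union>) Z ` Pow (U - X))"
  proof
    fix W assume "W \<in> J"
    then have "W = (W \<inter> X) \<union> (W - X)" "W \<inter> X \<in> P" "W - X \<in> Pow (U - X)"
      using assms(2) unfolding P_def by auto
    then show "W \<in> (\<Union>Z\<in>P. (\<union>) Z ` Pow (U - X))" by blast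
  qed
  then have "card J \<le> card (\<Union>Z\<in>P. (\<union>) Z ` Pow (U - X))"
    using \<open>finite P\<close> assms(1) by (intro card_mono) auto
  also have "\<dots> \<le> (\<Sum>Z\<in>P. card ((\<union>) Z ` Pow (U - X)))" by (rule card_UN_le[OF \<open>finite P\<close>])
  also have "\<dots> \<le> (\<Sum>Z\<in>P. 2 ^ card (U - X))"
    using assms(1) by (intro sum_mono) (metis card_Pow card_image_le finite_Diff finite_Pow_iff)
  finally show ?thesis unfolding P_def by simp
qed

lemma card_traces_large:
  assumes "finite U" "J \<subseteq> Pow U" "X \<subseteq> U" "2 ^ card U \<le> card J * 2 ^ e"
  shows "2 ^ card X \<le> card ((\<lambda>W. W \<inter> X) ` J) * (2::nat) ^ e"
proof -
  have "(2::nat) ^ card X * 2 ^ card (U - X) = 2 ^ card U"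
    using assms(1,3) by (simp add: card_Diff_subset finite_subset card_mono power_add[symmetric])
  also have "\<dots> \<le> card ((\<lambda>W. W \<inter> X) ` J) * 2 ^ card (U - X) * 2 ^ e"
    using assms(4) card_le_card_traces[OF assms(1-3)] by (meson le_trans mult_le_mono1)
  finally show ?thesis by (simp add: algebra_simps)
qed

lemma large_family_shatters_balanced_set:
  assumes U: "finite U" "J \<subseteq> Pow U" "2 ^ card U \<le> card J * 2 ^ e"
    and X: "X1 \<subseteq> U" "X2 \<subseteq> U" "X1 \<inter> X2 = {}" "card X1 = h" "card X2 = h"
    and s: "a \<le> s" "b \<le> s" "2 ^ (e + 1) * s * (h + 1) ^ s < (2::nat) ^ h"
  obtains Z1 Z2 where "Z1 \<subseteq> X1" "card Z1 = a" "Z2 \<subseteq> X2" "card Z2 = b" "shatters J (Z1 \<union> Z2)"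
proof -
  define P where "P = (\<lambda>W. W \<inter> (X1 \<union> X2)) ` J"
  define Bad where "Bad = {Y. Y \<subseteq> X1 \<union> X2 \<and> (card (Y \<inter> X1) < a \<or> card (Y \<inter> X2) < b)}"
  have fin: "finite X1" "finite X2" using X U(1) by (auto intro: finite_subset)
  have "2 ^ (2 * h) \<le> card P * 2 ^ e"
    using card_traces_large[OF U(1,2) _ U(3), of "X1 \<union> X2"] X fin
    by (simp add: P_def card_Un_disjoint mult_2)
  also have "card P \<le> card {Y. Y \<subseteq> X1 \<union> X2 \<and> shatters P Y}"
    using fin unfolding P_def by (intro card_le_card_shattered) auto
  finally have many: "2 ^ (2 * h) \<le> card {Y. Y \<subseteq> X1 \<union> X2 \<and> shatters P Y} * 2 ^ e"
    by (simp add: mult_le_mono1)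
  have "card Bad * 2 ^ e \<le> 2 * s * (h + 1) ^ s * 2 ^ h * 2 ^ e"
    unfolding Bad_def using card_unbalanced_subsets[OF fin X(4,5) s(1,2)] by simp
  also have "\<dots> = (2 ^ (e + 1) * s * (h + 1) ^ s) * 2 ^ h" by (simp add: algebra_simps)
  also have "\<dots> < 2 ^ h * 2 ^ h" using s(3) by simp
  finally have "card Bad * 2 ^ e < 2 ^ (2 * h)" by (simp add: power_add[symmetric] mult_2)
  have "\<not> {Y. Y \<subseteq> X1 \<union> X2 \<and> shatters P Y} \<subseteq> Bad"
  proof
    assume "{Y. Y \<subseteq> X1 \<union> X2 \<and> shatters P Y} \<subseteq> Bad"
    moreover have "finite Bad" using fin unfolding Bad_def by simp
    ultimately have "card {Y. Y \<subseteq> X1 \<union> X2 \<and> shatters P Y} * 2 ^ e \<le> card Bad * 2 ^ e"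
      by (intro mult_le_mono1 card_mono)
    with many \<open>card Bad * 2 ^ e < 2 ^ (2 * h)\<close> show False by linarith
  qed
  then obtain Y where Y: "Y \<subseteq> X1 \<union> X2" "shatters P Y" and "Y \<notin> Bad" by auto
  then have Y_large: "a \<le> card (Y \<inter> X1)" "b \<le> card (Y \<inter> X2)"
    unfolding Bad_def by simp_all
  obtain Z1 where Z1: "Z1 \<subseteq> Y \<inter> X1" "card Z1 = a" using Y_large(1) by (meson obtain_subset_with_card_n)
  obtain Z2 where Z2: "Z2 \<subseteq> Y \<inter> X2" "card Z2 = b" using Y_large(2) by (meson obtain_subset_with_card_n)
  have "shatters J Y"
  proof (rule shatters_by_traces[OF Y(2)])
    fix W' assume "W' \<in> P"
    then obtain W where "W \<in> J" "W' = W \<inter> (X1 \<union> X2)" unfolding P_def by blast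
    moreover have "W \<inter> (X1 \<union> X2) \<inter> Y = W \<inter> Y" using Y(1) by blast
    ultimately show "\<exists>W \<in> J. W \<inter> Y = W' \<inter> Y" by metis
  qed
  moreover have "Z1 \<union> Z2 \<subseteq> Y" using Z1(1) Z2(1) by blast
  ultimately have "shatters J (Z1 \<union> Z2)" by (rule shatters_subset)
  moreover have "Z1 \<subseteq> X1" "Z2 \<subseteq> X2" using Z1(1) Z2(1) by blast+
  ultimately show ?thesis using that Z1(2) Z2(2) by metis
qed

lemma exp_dominates_poly: "\<exists>h \<ge> h0. c * (h + 1) ^ K < (2::nat) ^ h"
proof -
  have sq: "j ^ 2 \<le> (2::nat) ^ j" if "4 \<le> j" for j
    using that
  proof (induction j rule: dec_induct)
    case (step n)
    have "(Suc n) ^ 2 = n ^ 2 + 2 * n + 1" by (simp add: power2_eq_square)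
    also have "\<dots> \<le> n ^ 2 + n ^ 2"
    proof -
      have "4 * n \<le> n * n" using step.hyps(1) by (rule mult_le_mono1)
      then show ?thesis using step.hyps(1) unfolding power2_eq_square by linarith
    qed
    also have "\<dots> \<le> 2 ^ Suc n" using step.IH by simp
    finally show ?case .
  qed simp
  define j where "j = max (max 4 (K + 2)) (max c h0)"
  define h where "h = (K + 1) * j"
  have j: "4 \<le> j" "K + 2 \<le> j" "c \<le> j" "h0 \<le> j" unfolding j_def by auto
  have "h + 1 \<le> j ^ 2"
    using j(1) mult_le_mono1[OF j(2), of j] unfolding h_def by (simp add: power2_eq_square algebra_simps)
  then have "h + 1 \<le> 2 ^ j" using sq[OF j(1)] by linarith
  then have "(h + 1) ^ K \<le> (2 ^ j) ^ K" by (rule power_mono) simp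
  moreover have "c < 2 ^ j" using j(3) less_exp[of j] by linarith
  ultimately have "c * (h + 1) ^ K < 2 ^ j * (2 ^ j) ^ K"
    by (intro mult_less_le_imp_less) simp_all
  also have "\<dots> = 2 ^ h" unfolding h_def by (simp add: power_mult[symmetric] power_add[symmetric] algebra_simps)
  finally have "c * (h + 1) ^ K < 2 ^ h" .
  moreover have "h0 \<le> h" using j(4) unfolding h_def by simp
  ultimately show ?thesis by blast
qed

lemma card_div_fiber:
  assumes "bij_betw g D {..<d * m}" "l < m"
  shows "card {x \<in> D. g x div d = l} = d"
proof (cases "d = 0")
  case True
  then show ?thesis using assms(1) by (simp add: bij_betw_def)
next
  case False
  have "inj_on g {x \<in> D. g x div d = l}" using assms(1) by (auto simp: bij_betw_def intro: inj_on_subset)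
  moreover have "g ` {x \<in> D. g x div d = l} = {l * d..<l * d + d}"
  proof -
    have "l * d + d \<le> d * m" using assms(2) mult_le_mono1[of "Suc l" m d] by (simp add: mult.commute)
    moreover have "r div d = l \<longleftrightarrow> l * d \<le> r \<and> r < l * d + d" for r
      using False by (auto simp: div_nat_eqI algebra_simps intro: div_times_less_eq_dividend
          dest: dividend_less_times_div)
    moreover have "g ` {x \<in> D. g x div d = l} = {r \<in> g ` D. r div d = l}" by blast
    moreover have "g ` D = {..<d * m}" using assms(1) by (simp add: bij_betw_def)
    ultimately show ?thesis by auto
  qed
  ultimately have "card {x \<in> D. g x div d = l} = card {l * d..<l * d + d}"
    by (metis card_image)
  then show ?thesis by simp
qed

definition rank_block :: "nat \<Rightarrow> nat \<Rightarrow> (nat set \<Rightarrow> nat) \<Rightarrow> nat \<Rightarrow> nat set set" where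
  "rank_block N e g l = {W. W \<subseteq> {..<N} \<and> g W div 2 ^ (N - e) = l}"

lemma card_rank_block:
  assumes "bij_betw g (Pow {..<N}) {..<2 ^ N}" "e \<le> N" "l < 2 ^ e"
  shows "card (rank_block N e g l) = 2 ^ (N - e)"
proof -
  have "(2::nat) ^ N = 2 ^ (N - e) * 2 ^ e" using assms(2) by (simp add: power_add[symmetric])
  then show ?thesis
    using card_div_fiber[of g "Pow {..<N}" "2 ^ (N - e)" "2 ^ e" l] assms(1,3)
    unfolding rank_block_def by simp
qed

lemma ramsey_number_exists: "\<exists>N \<ge> (N0::nat). partn_lst {..<N} qs r"
proof -
  obtain N1 :: nat where "partn_lst {..<N1} qs r" using ramsey_full[of qs r] by blast
  then have "partn_lst {..<max N0 N1} qs r" by (rule partn_lst_greater_resource) simp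
  then show ?thesis by (intro exI[of _ "max N0 N1"]) simp
qed

lemma partn_lst_set_colouring:
  assumes "partn_lst Y (replicate (2 ^ card K) m) r" "finite K" "\<And>T. T \<in> nsets Y r \<Longrightarrow> f T \<subseteq> K"
  obtains H where "H \<in> nsets Y m" "\<And>T T'. T \<in> nsets H r \<Longrightarrow> T' \<in> nsets H r \<Longrightarrow> f T = f T'"
proof -
  obtain cod where cod: "bij_betw cod (Pow K) {..<(2::nat) ^ card K}"
    using assms(2) finite_same_card_bij[of "Pow K" "{..<(2::nat) ^ card K}"] by (auto simp: card_Pow)
  have "cod \<circ> f \<in> nsets Y r \<rightarrow> {..<length (replicate (2 ^ card K) m)}"
    using assms(3) cod by (auto simp: bij_betw_def)
  then obtain i H where H: "H \<in> nsets Y m" "(cod \<circ> f) ` nsets H r \<subseteq> {i}"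
    using assms(1) unfolding partn_lst_def monochromatic_def by fastforce
  have "f T = f T'" if "T \<in> nsets H r" "T' \<in> nsets H r" for T T'
  proof -
    have "nsets H r \<subseteq> nsets Y r" using H(1) by (intro nsets_mono) (simp add: nsets_def)
    then have "f T \<in> Pow K" "f T' \<in> Pow K" using that assms(3) by auto
    moreover have "cod (f T) = i" "cod (f T') = i" using that H(2) by auto
    ultimately show ?thesis using cod unfolding bij_betw_def inj_on_def by metis
  qed
  with H(1) show ?thesis using that by blast
qed

definition initial_part :: "nat set \<Rightarrow> nat \<Rightarrow> nat set" where
  "initial_part T a = {t \<in> T. card {u \<in> T. u < t} < a}"

lemma card_initial_part:
  assumes "finite T" "a \<le> card T"
  shows "card (initial_part T a) = a"
  using card_bij_betw_lessThan_below[OF bij_betw_order_rank[OF assms(1) strict_linear_order_on_less_than] assms(2)]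
  by (simp add: initial_part_def order_rank_def)

lemma initial_part_less:
  assumes "finite T" "x \<in> initial_part T a" "y \<in> T - initial_part T a"
  shows "x < y"
proof -
  have "card {u \<in> T. u < x} < a" "\<not> card {u \<in> T. u < y} < a"
    using assms(2,3) by (auto simp: initial_part_def)
  then have "order_rank less_than T x < order_rank less_than T y"
    by (simp add: order_rank_def)
  then show ?thesis
    using order_rank_less_iff[OF assms(1) strict_linear_order_on_less_than] assms(2,3)
    by (simp add: initial_part_def)
qed

lemma initial_part_Un:
  assumes "finite T1" "finite T2" "\<And>x y. x \<in> T1 \<Longrightarrow> y \<in> T2 \<Longrightarrow> x < y" "card T1 = a"
  shows "initial_part (T1 \<union> T2) a = T1"
proof -
  have "card {u \<in> T1 \<union> T2. u < t} < a" if "t \<in> T1" for t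
  proof -
    have "{u \<in> T1 \<union> T2. u < t} \<subseteq> T1 - {t}" using that assms(3) by fastforce
    then have "card {u \<in> T1 \<union> T2. u < t} \<le> card (T1 - {t})" using assms(1) by (intro card_mono) auto
    also have "\<dots> < a" using card_Diff1_less[OF assms(1) that] assms(4) by simp
    finally show ?thesis .
  qed
  moreover have "\<not> card {u \<in> T1 \<union> T2. u < t} < a" if "t \<in> T2" for t
  proof -
    have "T1 \<subseteq> {u \<in> T1 \<union> T2. u < t}" using that assms(3) by blast
    moreover have "finite {u \<in> T1 \<union> T2. u < t}" using assms(1,2) by simp
    ultimately have "a \<le> card {u \<in> T1 \<union> T2. u < t}" using assms(4) card_mono by metis
    then show ?thesis by simp
  qed
  ultimately show ?thesis unfolding initial_part_def by blast
qed

definition split_image :: "(nat \<Rightarrow> 'a) \<Rightarrow> (nat \<Rightarrow> 'a) \<Rightarrow> nat \<Rightarrow> nat set \<Rightarrow> 'a set" where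
  "split_image la hi a T = la ` initial_part T a \<union> hi ` (T - initial_part T a)"

lemma split_image_Un:
  assumes "finite T1" "finite T2" "\<And>x y. x \<in> T1 \<Longrightarrow> y \<in> T2 \<Longrightarrow> x < y" "card T1 = a"
  shows "split_image la hi a (T1 \<union> T2) = la ` T1 \<union> hi ` T2"
proof -
  have "T1 \<inter> T2 = {}" using assms(3) by fastforce
  then have "T1 \<union> T2 - T1 = T2" by blast
  then show ?thesis by (simp add: split_image_def initial_part_Un[OF assms])
qed

lemma card_split_image_Int:
  assumes "inj_on la A" "inj_on hi A" "la ` A \<subseteq> Low" "hi ` A \<subseteq> High" "Low \<inter> High = {}"
    and "T \<subseteq> A" "finite T" "card T = a + b"
  shows "card (split_image la hi a T \<inter> Low) = a" "card (split_image la hi a T \<inter> High) = b"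
    "split_image la hi a T \<subseteq> Low \<union> High"
proof -
  have I: "initial_part T a \<subseteq> T" "card (initial_part T a) = a"
    using card_initial_part[OF assms(7)] assms(8) by (auto simp: initial_part_def)
  then have "card (T - initial_part T a) = b" using assms(7,8) by (simp add: card_Diff_subset finite_subset)
  moreover have "split_image la hi a T \<inter> Low = la ` initial_part T a"
    "split_image la hi a T \<inter> High = hi ` (T - initial_part T a)"
    using assms(3-6) I(1) unfolding split_image_def by blast+
  moreover have "inj_on la (initial_part T a)" "inj_on hi (T - initial_part T a)"
    using assms(1,2,6) I(1) by (auto intro: inj_on_subset)
  ultimately show "card (split_image la hi a T \<inter> Low) = a" "card (split_image la hi a T \<inter> High) = b"
    using I(2) by (simp_all add: card_image)
  show "split_image la hi a T \<subseteq> Low \<union> High"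
    using assms(3,4,6) I(1) unfolding split_image_def by blast
qed

lemma exists_set_with_shattered_split_image:
  assumes U: "finite U" "J \<subseteq> Pow U" "2 ^ card U \<le> card J * 2 ^ e"
    and la: "inj_on la H1" "la ` H1 \<subseteq> U" and hi: "inj_on hi H2" "hi ` H2 \<subseteq> U"
    and H: "la ` H1 \<inter> hi ` H2 = {}" "finite H1" "finite H2" "card H1 = h" "card H2 = h"
      "\<And>x y. x \<in> H1 \<Longrightarrow> y \<in> H2 \<Longrightarrow> x < y"
    and s: "a + b = s" "2 ^ (e + 1) * s * (h + 1) ^ s < (2::nat) ^ h"
  obtains T where "T \<subseteq> H1 \<union> H2" "card T = s" "shatters J (split_image la hi a T)"
proof -
  have "card (la ` H1) = h" "card (hi ` H2) = h" "a \<le> s" "b \<le> s"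
    using la(1) hi(1) H(4,5) s(1) by (simp_all add: card_image)
  then obtain Z1 Z2 where Z: "Z1 \<subseteq> la ` H1" "card Z1 = a" "Z2 \<subseteq> hi ` H2" "card Z2 = b"
    "shatters J (Z1 \<union> Z2)"
    using large_family_shatters_balanced_set[OF U la(2) hi(2) H(1) _ _ _ _ s(2)] by blast
  define T1 where "T1 = {t \<in> H1. la t \<in> Z1}"
  define T2 where "T2 = {t \<in> H2. hi t \<in> Z2}"
  have T12: "T1 \<subseteq> H1" "T2 \<subseteq> H2" "finite T1" "finite T2" using H(2,3) by (auto simp: T1_def T2_def)
  have "la ` T1 = Z1" "hi ` T2 = Z2" using Z(1,3) unfolding T1_def T2_def by blast+
  moreover have "inj_on la T1" "inj_on hi T2"
    using la(1) hi(1) unfolding T1_def T2_def by (auto intro: inj_on_subset)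
  ultimately have "card T1 = a" "card T2 = b" using Z(2,4) by (metis card_image)+
  moreover have "T1 \<inter> T2 = {}" using T12(1,2) H(6) by (meson disjoint_iff less_irrefl subsetD)
  moreover have "split_image la hi a (T1 \<union> T2) = la ` T1 \<union> hi ` T2"
    by (rule split_image_Un[OF T12(3,4) _ \<open>card T1 = a\<close>]) (use T12(1,2) H(6) in blast)
  ultimately show ?thesis
  proof (intro that[of "T1 \<union> T2"])
    show "T1 \<union> T2 \<subseteq> H1 \<union> H2" using T12(1,2) by blast
  qed (use T12(3,4) Z(5) s(1) \<open>la ` T1 = Z1\<close> \<open>hi ` T2 = Z2\<close> in \<open>simp_all add: card_Un_disjoint\<close>)
qed

lemma obtain_lower_upper_halves:
  fixes H :: "nat set"
  assumes "finite H" "card H = 2 * h"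
  obtains H1 H2 where "H1 \<union> H2 = H" "card H1 = h" "card H2 = h" "\<And>x y. x \<in> H1 \<Longrightarrow> y \<in> H2 \<Longrightarrow> x < y"
proof
  show "initial_part H h \<union> (H - initial_part H h) = H" unfolding initial_part_def by blast
  show "card (initial_part H h) = h" using card_initial_part[OF assms(1)] assms(2) by simp
  then show "card (H - initial_part H h) = h"
    using assms by (simp add: card_Diff_subset finite_subset initial_part_def)
qed (use initial_part_less[OF assms(1)] in blast)

lemma obtain_inj_into:
  assumes "finite A" "L \<le> card A"
  obtains f where "inj_on f {..<L}" "f ` {..<L} \<subseteq> A"
proof -
  obtain A' where "A' \<subseteq> A" "card A' = L" using assms(2) by (meson obtain_subset_with_card_n)
  moreover from this obtain f where "bij_betw f {..<L} A'"
    using assms(1) finite_same_card_bij[of "{..<L}" A'] by (auto intro: finite_subset)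
  ultimately show ?thesis using that by (auto simp: bij_betw_def)
qed

lemma exists_split_set_shattered_by_blocks:
  assumes g: "bij_betw g (Pow {..<N}) {..<2 ^ N}" "e \<le> N"
    and s: "a + b = s" "s \<le> h" "2 ^ (e + 1) * s * (h + 1) ^ s < (2::nat) ^ h"
    and L: "partn_lst {..<L} (replicate (2 ^ 2 ^ e) (2 * h)) s"
    and LH: "Low \<subseteq> {..<N}" "High \<subseteq> {..<N}" "Low \<inter> High = {}" "L \<le> card Low" "L \<le> card High"
  obtains S where "S \<subseteq> Low \<union> High" "card (S \<inter> Low) = a" "card (S \<inter> High) = b"
    "\<And>l. l < 2 ^ e \<Longrightarrow> shatters (rank_block N e g l) S"
proof -
  have "finite Low" "finite High" using LH(1,2) finite_subset by blast+
  obtain la where la: "inj_on la {..<L}" "la ` {..<L} \<subseteq> Low"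
    using obtain_inj_into[OF \<open>finite Low\<close> LH(4)] by blast
  obtain hi where hi: "inj_on hi {..<L}" "hi ` {..<L} \<subseteq> High"
    using obtain_inj_into[OF \<open>finite High\<close> LH(5)] by blast
  \<comment> \<open>On a homogeneous \<open>2h\<close>-set every
    block shatters the image of some \<open>s\<close>-subset by the counting argument, hence that of all of them.\<close>
  define good where "good T = {l. l < 2 ^ e \<and> shatters (rank_block N e g l) (split_image la hi a T)}" for T
  obtain H where H: "H \<in> nsets {..<L} (2 * h)"
    and hom: "\<And>T T'. T \<in> nsets H s \<Longrightarrow> T' \<in> nsets H s \<Longrightarrow> good T = good T'"
    using partn_lst_set_colouring[of "{..<L}" "{..<2 ^ e}" "2 * h" s good] L
    by (auto simp: good_def)
  have HL: "H \<subseteq> {..<L}" "finite H" "card H = 2 * h" using H by (auto simp: nsets_def)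
  obtain H1 H2 where H12: "H1 \<union> H2 = H" "card H1 = h" "card H2 = h" "\<And>x y. x \<in> H1 \<Longrightarrow> y \<in> H2 \<Longrightarrow> x < y"
    using obtain_lower_upper_halves[OF HL(2,3)] by blast
  have "s \<le> card H" using s(2) HL(3) by simp
  then obtain T0 where "T0 \<subseteq> H" "card T0 = s" "finite T0" by (rule obtain_subset_with_card_n)
  then have T0: "T0 \<in> nsets H s" by (simp add: nsets_def)
  have good_T0: "l \<in> good T0" if l: "l < 2 ^ e" for l
  proof -
    have J: "rank_block N e g l \<subseteq> Pow {..<N}" "2 ^ card {..<N} \<le> card (rank_block N e g l) * 2 ^ e"
      using card_rank_block[OF g l] g(2) by (auto simp: rank_block_def power_add[symmetric])
    have H12L: "H1 \<subseteq> {..<L}" "H2 \<subseteq> {..<L}" "finite H1" "finite H2" using H12(1) HL(1,2) by auto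
    have "la ` H1 \<subseteq> Low" using image_mono[OF H12L(1), of la] la(2) by (rule order_trans)
    moreover have "hi ` H2 \<subseteq> High" using image_mono[OF H12L(2), of hi] hi(2) by (rule order_trans)
    ultimately have images: "la ` H1 \<subseteq> {..<N}" "hi ` H2 \<subseteq> {..<N}" "la ` H1 \<inter> hi ` H2 = {}"
      using LH(1-3) by (blast, blast, blast)
    obtain T where "T \<subseteq> H1 \<union> H2" "card T = s" "shatters (rank_block N e g l) (split_image la hi a T)"
      using exists_set_with_shattered_split_image[OF finite_lessThan[of N] J inj_on_subset[OF la(1) H12L(1)]
          images(1) inj_on_subset[OF hi(1) H12L(2)] images(2,3) H12L(3,4) H12(2-4) s(1,3)] .
    moreover from this have "T \<in> nsets H s" using H12(1) HL(2) by (auto simp: nsets_def finite_subset)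
    ultimately show ?thesis using hom[OF T0] l unfolding good_def by auto
  qed
  have "T0 \<subseteq> {..<L}" "finite T0" "card T0 = a + b" using T0 HL(1) s(1) by (auto simp: nsets_def)
  note split = card_split_image_Int[OF la(1) hi(1) la(2) hi(2) LH(3) this]
  show ?thesis
  proof (rule that[OF split(3,1,2)])
    show "shatters (rank_block N e g l) (split_image la hi a T0)" if "l < 2 ^ e" for l
      using good_T0[OF that] unfolding good_def by simp
  qed
qed

lemma exists_median:
  fixes H :: "nat set"
  assumes "finite H" "card H = 2 * L + 1"
  obtains p where "p \<in> H" "card {x \<in> H. x < p} = L" "card {x \<in> H. p < x} = L"
proof -
  define rk where "rk = order_rank less_than H"
  have bij: "bij_betw rk H {..<2 * L + 1}"
    using bij_betw_order_rank[OF assms(1) strict_linear_order_on_less_than] assms(2) by (simp add: rk_def)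
  then have "L \<in> rk ` H" by (simp add: bij_betw_def)
  then obtain p where p: "p \<in> H" "rk p = L" by blast
  have less: "x < y \<longleftrightarrow> rk x < rk y" if "x \<in> H" "y \<in> H" for x y
    using order_rank_less_iff[OF assms(1) strict_linear_order_on_less_than that] by (simp add: rk_def)
  have "{x \<in> H. x < p} = {x \<in> H. rk x < L}" "{x \<in> H. p < x} = {x \<in> H. L + 1 \<le> rk x}"
    using less p by auto
  then show ?thesis
    using that[OF p(1)] card_bij_betw_lessThan_below[OF bij, of L] card_bij_betw_lessThan_above[OF bij, of "L + 1"]
    by simp
qed

lemma exists_set_with_good_point_at_position:
  assumes g: "bij_betw g (Pow {..<N}) {..<2 ^ N}" "e \<le> N"
    and s: "k = s + 1" "s \<le> h" "2 ^ (e + 1) * s * (h + 1) ^ s < (2::nat) ^ h" "i < k"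
    and L: "partn_lst {..<L} (replicate (2 ^ 2 ^ e) (2 * h)) s"
    and H: "H \<subseteq> {..<N}" "p \<in> H" "L \<le> card {x \<in> H. x < p}" "L \<le> card {x \<in> H. p < x}"
  obtains C where "C \<subseteq> H" "card C = k" "p \<in> C" "card {c \<in> C. c < p} = i"
    "\<And>l. l < 2 ^ e \<Longrightarrow> shatters (rank_block N e g l) (C - {p})"
proof -
  define Low where "Low = {x \<in> H. x < p}"
  define High where "High = {x \<in> H. p < x}"
  have LH: "Low \<subseteq> {..<N}" "High \<subseteq> {..<N}" "Low \<inter> High = {}" "L \<le> card Low" "L \<le> card High"
    using H unfolding Low_def High_def by auto
  have "i + (s - i) = s" using s(1,4) by simp
  then obtain S where S: "S \<subseteq> Low \<union> High" "card (S \<inter> Low) = i" "card (S \<inter> High) = s - i"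
    "\<And>l. l < 2 ^ e \<Longrightarrow> shatters (rank_block N e g l) S"
    using exists_split_set_shattered_by_blocks[OF g _ s(2,3) L LH] by blast
  have "finite S" using S(1) LH(1,2) by (meson finite_Un finite_lessThan finite_subset)
  have "S = (S \<inter> Low) \<union> (S \<inter> High)" "(S \<inter> Low) \<inter> (S \<inter> High) = {}" using S(1) LH(3) by blast+
  then have "card S = card (S \<inter> Low) + card (S \<inter> High)"
    using \<open>finite S\<close> by (metis card_Un_disjoint finite_Int)
  then have "card S = s" using S(2,3) s(1,4) by simp
  moreover have "p \<notin> S" using S(1) unfolding Low_def High_def by blast
  moreover have "{c \<in> insert p S. c < p} = S \<inter> Low" using S(1) unfolding Low_def High_def by auto
  moreover have "insert p S \<subseteq> H" using S(1) H(2) unfolding Low_def High_def by blast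
  ultimately show ?thesis
  proof (intro that[of "insert p S"])
    show "card (insert p S) = k" using \<open>card S = s\<close> \<open>p \<notin> S\<close> \<open>finite S\<close> s(1) by simp
    show "shatters (rank_block N e g l) (insert p S - {p})" if "l < 2 ^ e" for l
      using S(4)[OF that] \<open>p \<notin> S\<close> by simp
  qed (use S(2) in simp_all)
qed

lemma all_points_if_all_ranks:
  fixes C :: "nat set"
  assumes "finite C" "{..<card C} \<subseteq> (\<lambda>q. card {c \<in> C. c < q}) ` {q \<in> C. P q}" "q \<in> C"
  shows "P q"
proof -
  have rank: "bij_betw (\<lambda>q. card {c \<in> C. c < q}) C {..<card C}"
    using bij_betw_order_rank[OF assms(1) strict_linear_order_on_less_than] by (simp add: order_rank_less_than)
  then have "card {c \<in> C. c < q} \<in> {..<card C}" using assms(3) by (auto simp: bij_betw_def)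
  then obtain q' where "q' \<in> C" "P q'" "card {c \<in> C. c < q'} = card {c \<in> C. c < q}" using assms(2) by auto
  moreover from this have "q' = q" using inj_onD[OF bij_betw_imp_inj_on[OF rank]] assms(3) by blast
  ultimately show ?thesis by simp
qed

lemma exists_set_shattered_by_blocks_of_all_points:
  assumes g: "\<And>q. q < N \<Longrightarrow> bij_betw (g q) (Pow {..<N}) {..<2 ^ N}" "e \<le> N"
    and s: "k = s + 1" "s \<le> h" "2 ^ (e + 1) * s * (h + 1) ^ s < (2::nat) ^ h"
    and L: "k \<le> L" "partn_lst {..<L} (replicate (2 ^ 2 ^ e) (2 * h)) s"
    and N: "partn_lst {..<N} (replicate (2 ^ k) (2 * L + 1)) k"
  obtains C where "C \<subseteq> {..<N}" "card C = k"
    "\<And>q l. q \<in> C \<Longrightarrow> l < 2 ^ e \<Longrightarrow> shatters (rank_block N e (g q) l) (C - {q})"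
proof -
  \<comment> \<open>On a homogeneous set the median is
    good at every position in some \<open>k\<close>-subset, so every position, hence every point, is good.\<close>
  define good where "good q C \<longleftrightarrow> (\<forall>l < 2 ^ e. shatters (rank_block N e (g q) l) (C - {q}))" for q C
  define positions where "positions C = (\<lambda>q. card {c \<in> C. c < q}) ` {q \<in> C. good q C}" for C
  have "positions C \<subseteq> {..<k}" if "C \<in> nsets {..<N} k" for C
    using that bij_betw_order_rank[OF _ strict_linear_order_on_less_than, of C]
    by (auto simp: positions_def nsets_def order_rank_def bij_betw_def)
  then obtain H where H: "H \<in> nsets {..<N} (2 * L + 1)"
    and hom: "\<And>C C'. C \<in> nsets H k \<Longrightarrow> C' \<in> nsets H k \<Longrightarrow> positions C = positions C'"
    using partn_lst_set_colouring[of "{..<N}" "{..<k}" "2 * L + 1" k positions] N by auto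
  have HN: "H \<subseteq> {..<N}" "finite H" "card H = 2 * L + 1" using H by (auto simp: nsets_def)
  obtain p where p: "p \<in> H" "card {x \<in> H. x < p} = L" "card {x \<in> H. p < x} = L"
    using exists_median[OF HN(2,3)] .
  have all_positions: "i \<in> positions C" if "C \<in> nsets H k" "i < k" for C i
  proof -
    have "p < N" using p(1) HN(1) by blast
    obtain C' where C': "C' \<subseteq> H" "card C' = k" "p \<in> C'" "card {c \<in> C'. c < p} = i"
      "\<And>l. l < 2 ^ e \<Longrightarrow> shatters (rank_block N e (g p) l) (C' - {p})"
      using exists_set_with_good_point_at_position[OF g(1)[OF \<open>p < N\<close>] g(2) s \<open>i < k\<close> L(2) HN(1) p(1)] p(2,3)
      by auto
    then have "i \<in> positions C'" unfolding positions_def good_def by force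
    moreover have "C' \<in> nsets H k" using C'(1,2) HN(2) by (auto simp: nsets_def intro: finite_subset)
    ultimately show ?thesis using hom[OF that(1)] by simp
  qed
  have "k \<le> card H" using L(1) HN(3) by simp
  then obtain C where C: "C \<subseteq> H" "card C = k" "finite C" by (rule obtain_subset_with_card_n)
  then have "{..<card C} \<subseteq> positions C" using all_positions by (auto simp: nsets_def)
  then have "good q C" if "q \<in> C" for q
    using all_points_if_all_ranks[OF C(3), of "\<lambda>q. good q C", OF _ that] by (simp add: positions_def)
  moreover have "C \<subseteq> {..<N}" using C(1) HN(1) by (rule order_trans)
  ultimately show ?thesis using that[of C] C(2) unfolding good_def by blast
qed

lemma exists_set_shattered_by_blocks:
  "\<exists>N \<ge> e. \<forall>g :: nat \<Rightarrow> nat set \<Rightarrow> nat. (\<forall>q < N. bij_betw (g q) (Pow {..<N}) {..<2 ^ N}) \<longrightarrow>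
     (\<exists>C \<subseteq> {..<N}. card C = k \<and> (\<forall>q \<in> C. \<forall>l < 2 ^ e. shatters (rank_block N e (g q) l) (C - {q})))"
proof (cases "k = 0")
  case False
  define s where "s = k - 1"
  obtain h where h: "s \<le> h" "2 ^ (e + 1) * s * (h + 1) ^ s < (2::nat) ^ h"
    using exp_dominates_poly by blast
  obtain L where L: "k \<le> L" "partn_lst {..<L} (replicate (2 ^ 2 ^ e) (2 * h)) s"
    using ramsey_number_exists by blast
  obtain N where N: "e \<le> N" "partn_lst {..<N} (replicate (2 ^ k) (2 * L + 1)) k"
    using ramsey_number_exists by blast
  have "k = s + 1" using False s_def by simp
  show ?thesis
  proof (intro exI[of _ N] conjI allI impI)
    fix g :: "nat \<Rightarrow> nat set \<Rightarrow> nat"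
    assume "\<forall>q < N. bij_betw (g q) (Pow {..<N}) {..<2 ^ N}"
    then obtain C where "C \<subseteq> {..<N}" "card C = k"
      "\<And>q l. q \<in> C \<Longrightarrow> l < 2 ^ e \<Longrightarrow> shatters (rank_block N e (g q) l) (C - {q})"
      using exists_set_shattered_by_blocks_of_all_points[OF _ N(1) \<open>k = s + 1\<close> h L N(2)] by blast
    then show "\<exists>C \<subseteq> {..<N}. card C = k \<and> (\<forall>q \<in> C. \<forall>l < 2 ^ e. shatters (rank_block N e (g q) l) (C - {q}))"
      by blast
  qed (rule N(1))
next
  case True
  then show ?thesis by (intro exI[of _ e] conjI allI impI exI[of _ "{}"]) auto
qed

section \<open>Structures in \<open>\<S>\<close> and their \<open>\<S>\<^sup>*\<close>-expansions\<close>

lemma same_part_refl [simp]: "same_part E x x"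
  by (simp add: same_part_def)

lemma same_part_sym: "same_part E x y \<Longrightarrow> same_part E y x"
  by (auto simp: same_part_def)

lemma same_part_restrict:
  "x \<in> A \<Longrightarrow> y \<in> A \<Longrightarrow> same_part (Eb \<inter> A \<times> A) x y \<longleftrightarrow> same_part Eb x y"
  by (auto simp: same_part_def)

lemma in_S_same_part_trans:
  assumes "in_S A E" "x \<in> A" "y \<in> A" "z \<in> A" "same_part E x y" "same_part E y z"
  shows "same_part E x z"
proof -
  have "trans (part_rel A E)"
    using assms(1) by (simp add: in_S_def complete_multipartite_def equiv_def)
  moreover have "(x, y) \<in> part_rel A E" "(y, z) \<in> part_rel A E" using assms(2-6) by (auto simp: part_rel_def)
  ultimately show ?thesis by (auto simp: part_rel_def dest: transD)
qed

lemma in_S_edge_not_same_part: "in_S A E \<Longrightarrow> (x, y) \<in> E \<Longrightarrow> \<not> same_part E x y"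
  by (auto simp: in_S_def complete_multipartite_def digraph_def same_part_def)

lemma in_S_edge_iff_not_reverse:
  "in_S A E \<Longrightarrow> \<not> same_part E x y \<Longrightarrow> (x, y) \<in> E \<longleftrightarrow> (y, x) \<notin> E"
  by (auto simp: in_S_def complete_multipartite_def digraph_def same_part_def)

lemma card_edges_between_pairs:
  assumes "u \<noteq> v" "x \<noteq> y"
  shows "card {(a, b). a \<in> {u, v} \<and> b \<in> {x, y} \<and> (a, b) \<in> E} =
    of_bool ((u, x) \<in> E) + of_bool ((u, y) \<in> E) + of_bool ((v, x) \<in> E) + of_bool ((v, y) \<in> E)"
proof -
  have eq: "{(a, b). a \<in> {u, v} \<and> b \<in> {x, y} \<and> (a, b) \<in> E} = {z \<in> {(u, x), (u, y), (v, x), (v, y)}. z \<in> E}"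
    by auto
  have "card {z \<in> {(u, x), (u, y), (v, x), (v, y)}. z \<in> E} = (\<Sum>z \<in> {z \<in> {(u, x), (u, y), (v, x), (v, y)}. z \<in> E}. 1)"
    by (rule card_eq_sum)
  also have "\<dots> = (\<Sum>z \<in> {(u, x), (u, y), (v, x), (v, y)}. if z \<in> E then 1 else 0)"
    by (rule sum.inter_filter) simp
  finally show ?thesis using assms eq by simp
qed

lemma in_S_edge_parity:
  assumes "in_S A E" "a \<in> A" "b \<in> A" "c \<in> A" "d \<in> A"
    and "same_part E a b" "same_part E c d" "\<not> same_part E a c"
  shows "((a, c) \<in> E) \<noteq> ((a, d) \<in> E) \<longleftrightarrow> ((b, c) \<in> E) \<noteq> ((b, d) \<in> E)"
proof (cases "a = b \<or> c = d")
  case False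
  define P where "P z = part_rel A E `` {z}" for z
  have P: "P a \<in> parts A E" "P c \<in> parts A E" using assms(2,4) by (auto simp: P_def parts_def quotientI)
  have mem: "a \<in> P a" "b \<in> P a" "c \<in> P c" "d \<in> P c"
    using assms(2-7) by (auto simp: P_def part_rel_def)
  have "c \<notin> P a" using assms(8) by (simp add: P_def part_rel_def)
  then have "P a \<noteq> P c" using mem(3) by blast
  moreover have "parity_ok A E" using assms(1) by (simp add: in_S_def)
  ultimately have ev: "even (card {(x, y). x \<in> {a, b} \<and> y \<in> {c, d} \<and> (x, y) \<in> E})"
    using False unfolding parity_ok_def by (elim ballE allE impE) (use P mem in auto)
  have "a \<noteq> b" "c \<noteq> d" using False by auto
  note ev[unfolded card_edges_between_pairs[OF this]]
  then show ?thesis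
    by (cases "(a, c) \<in> E"; cases "(a, d) \<in> E"; cases "(b, c) \<in> E"; cases "(b, d) \<in> E") simp_all
qed auto

text \<open>The properties of an \<open>\<S>\<^sup>*\<close>-expansion that the embedding uses; unlike the definition of
  \<open>\<S>\<^sup>*\<close> they do not refer to the auxiliary extension containing the points \<open>t\<^sub>i\<close>.\<close>

locale Sstar_structure =
  fixes A :: "nat set" and E R Lt :: "(nat \<times> nat) set"
  assumes in_S: "in_S A E"
    and order: "strict_linorder_on A Lt"
    and order_parts: "\<lbrakk>x \<in> A; x' \<in> A; y \<in> A; y' \<in> A; same_part E x x'; same_part E y y';
      \<not> same_part E x y; (x, y) \<in> Lt\<rbrakk> \<Longrightarrow> (x', y') \<in> Lt"
    and R_subset: "(x, u) \<in> R \<Longrightarrow> x \<in> A \<and> u \<in> A \<and> \<not> same_part E x u"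
    and R_source_part: "\<lbrakk>x \<in> A; x' \<in> A; same_part E x x'\<rbrakk> \<Longrightarrow> (x, u) \<in> R \<longleftrightarrow> (x', u) \<in> R"
    and R_parity: "\<lbrakk>x \<in> A; u \<in> A; u' \<in> A; same_part E u u'; \<not> same_part E x u\<rbrakk> \<Longrightarrow>
      ((x, u) \<in> R) \<noteq> ((x, u') \<in> R) \<longleftrightarrow> ((x, u) \<in> E) \<noteq> ((x, u') \<in> E)"
    and E_iff_order_R: "\<lbrakk>x \<in> A; u \<in> A; \<not> same_part E x u\<rbrakk> \<Longrightarrow>
      (x, u) \<in> E \<longleftrightarrow> ((x, u) \<in> Lt \<longleftrightarrow> ((x, u) \<in> R) \<noteq> ((u, x) \<in> R))"

locale Sstar_witness =
  fixes A :: "nat set" and E R Lt :: "(nat \<times> nat) set"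
    and Ab :: "nat set" and Eb :: "(nat \<times> nat) set" and t :: "nat \<Rightarrow> nat"
    and Ob :: "(nat \<times> nat) set" and k :: nat
  assumes in_S: "in_S A E" and in_S_Ab: "in_S Ab Eb" and subset: "A \<subseteq> Ab" and E_eq: "E = Eb \<inter> (A \<times> A)"
    and t_outside: "\<forall>i < k. t i \<in> Ab - A"
    and t_unique: "\<forall>P \<in> parts Ab Eb. \<exists>!i. i < k \<and> t i \<in> P"
    and t_edges: "\<forall>i j. i < j \<and> j < k \<longrightarrow> (t i, t j) \<in> Eb"
    and R_eq: "R = {(x, u). x \<in> A \<and> u \<in> A \<and> \<not> same_part Eb x u \<and>
                    (\<exists>i < k. same_part Eb (t i) x \<and> (t i, u) \<in> Eb)}"
    and Ob: "strict_linorder_on Ab Ob"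
    and Ob_convex: "\<forall>P \<in> parts Ab Eb. \<forall>a \<in> P. \<forall>c \<in> P. \<forall>b \<in> Ab. (a, b) \<in> Ob \<and> (b, c) \<in> Ob \<longrightarrow> b \<in> P"
    and t_order: "\<forall>i j. i < j \<and> j < k \<longrightarrow> (t i, t j) \<in> Ob"
    and Lt_eq: "Lt = Ob \<inter> (A \<times> A)"
begin

abbreviation sp where "sp \<equiv> same_part Eb"

lemma sp_trans: "x \<in> Ab \<Longrightarrow> y \<in> Ab \<Longrightarrow> z \<in> Ab \<Longrightarrow> sp x y \<Longrightarrow> sp y z \<Longrightarrow> sp x z"
  by (rule in_S_same_part_trans[OF in_S_Ab])

lemma same_part_iff: "x \<in> A \<Longrightarrow> y \<in> A \<Longrightarrow> same_part E x y \<longleftrightarrow> sp x y"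
  unfolding E_eq by (rule same_part_restrict)

lemma part_in_parts: "x \<in> Ab \<Longrightarrow> part_rel Ab Eb `` {x} \<in> parts Ab Eb"
  by (simp add: parts_def quotientI)

lemma mem_part: "x \<in> Ab \<Longrightarrow> y \<in> part_rel Ab Eb `` {x} \<longleftrightarrow> y \<in> Ab \<and> sp x y"
  by (auto simp: part_rel_def)

lemma t_in_part: "x \<in> Ab \<Longrightarrow> \<exists>i < k. sp (t i) x"
proof -
  assume x: "x \<in> Ab"
  then obtain i where "i < k" "t i \<in> part_rel Ab Eb `` {x}" using t_unique part_in_parts by blast
  then show ?thesis using mem_part[OF x] same_part_sym by blast
qed

lemma t_in_part_unique:
  assumes "x \<in> Ab" "i < k" "j < k" "sp (t i) x" "sp (t j) x"
  shows "i = j"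
proof -
  have "t i \<in> part_rel Ab Eb `` {x}" "t j \<in> part_rel Ab Eb `` {x}"
    using assms mem_part[OF assms(1)] t_outside same_part_sym by auto
  moreover obtain i0 where "\<And>i. i < k \<and> t i \<in> part_rel Ab Eb `` {x} \<Longrightarrow> i = i0"
    using t_unique part_in_parts[OF assms(1)] by metis
  ultimately show ?thesis using assms(2,3) by metis
qed

lemma R_iff_t_edge:
  assumes "x \<in> A" "u \<in> A" "\<not> sp x u" "i < k" "sp (t i) x"
  shows "(x, u) \<in> R \<longleftrightarrow> (t i, u) \<in> Eb"
proof
  assume "(x, u) \<in> R"
  then obtain j where j: "j < k" "sp (t j) x" "(t j, u) \<in> Eb" using R_eq by auto
  then have "j = i" using t_in_part_unique[of x j i] assms subset by auto
  then show "(t i, u) \<in> Eb" using j by simp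
qed (use assms R_eq in auto)

lemma Ob_parts:
  assumes "a \<in> Ab" "a' \<in> Ab" "b \<in> Ab" "b' \<in> Ab" "sp a a'" "sp b b'" "\<not> sp a b" "(a, b) \<in> Ob"
  shows "(a', b') \<in> Ob"
proof -
  have "\<forall>x \<in> Ab. \<forall>y \<in> Ab. x \<noteq> y \<longrightarrow> (x, y) \<in> Ob \<or> (y, x) \<in> Ob"
    using Ob by (simp add: strict_linorder_on_def)
  then have total: "(x, y) \<in> Ob \<or> (y, x) \<in> Ob" if "x \<in> Ab" "y \<in> Ab" "x \<noteq> y" for x y
    using that by blast
  have convex: "y \<in> part_rel Ab Eb `` {x}" if "x \<in> Ab" "x' \<in> Ab" "sp x x'" "y \<in> Ab"
    "(x, y) \<in> Ob" "(y, x') \<in> Ob" for x x' y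
  proof -
    have "x \<in> part_rel Ab Eb `` {x}" "x' \<in> part_rel Ab Eb `` {x}" using that mem_part by auto
    with that(4-6) show ?thesis using Ob_convex[rule_format, OF part_in_parts[OF that(1)]] by blast
  qed
  have n1: "\<not> sp a' b" using sp_trans[OF assms(1,2,3)] assms(5,7) by blast
  have n2: "\<not> sp a' b'" using sp_trans[OF assms(2,4,3)] same_part_sym[OF assms(6)] n1 by blast
  have "(a', b) \<in> Ob"
  proof (rule ccontr)
    assume "(a', b) \<notin> Ob"
    moreover have "a' \<noteq> b" using n1 by auto
    ultimately have "(b, a') \<in> Ob" using total[of a' b] assms(2,3) by blast
    then have "b \<in> part_rel Ab Eb `` {a}" by (rule convex[OF assms(1,2,5,3,8)])
    then show False using mem_part[OF assms(1)] assms(7) by blast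
  qed
  show ?thesis
  proof (rule ccontr)
    assume "(a', b') \<notin> Ob"
    moreover have "a' \<noteq> b'" using n2 by auto
    ultimately have "(b', a') \<in> Ob" using total[of a' b'] assms(2,4) by blast
    then have "a' \<in> part_rel Ab Eb `` {b'}"
      using convex[OF assms(4,3) same_part_sym[OF assms(6)] assms(2)] \<open>(a', b) \<in> Ob\<close> by blast
    then show False using mem_part[OF assms(4)] n2 same_part_sym by blast
  qed
qed

lemma Ob_facts:
  "(x, x) \<notin> Ob" "(x, y) \<in> Ob \<Longrightarrow> (y, z) \<in> Ob \<Longrightarrow> (x, z) \<in> Ob"
  "x \<in> Ab \<Longrightarrow> y \<in> Ab \<Longrightarrow> x \<noteq> y \<Longrightarrow> (x, y) \<in> Ob \<or> (y, x) \<in> Ob"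
  using Ob unfolding strict_linorder_on_def by blast+

lemma R_parity_Eb:
  assumes "x \<in> A" "u \<in> A" "u' \<in> A" "sp u u'" "\<not> sp x u"
  shows "((x, u) \<in> R) \<noteq> ((x, u') \<in> R) \<longleftrightarrow> ((x, u) \<in> Eb) \<noteq> ((x, u') \<in> Eb)"
proof -
  have Ab: "x \<in> Ab" "u \<in> Ab" "u' \<in> Ab" using assms subset by auto
  obtain i where i: "i < k" "sp (t i) x" using t_in_part[OF Ab(1)] by blast
  have ti: "t i \<in> Ab" using t_outside i(1) by blast
  have "\<not> sp (t i) u" using sp_trans[OF Ab(1) ti Ab(2)] same_part_sym[OF i(2)] assms(5) by blast
  moreover have "\<not> sp x u'" using sp_trans[OF Ab(1) Ab(3) Ab(2)] same_part_sym[OF assms(4)] assms(5) by blast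
  ultimately show ?thesis
    using in_S_edge_parity[OF in_S_Ab ti Ab i(2) assms(4)]
      R_iff_t_edge[OF assms(1,2,5) i] R_iff_t_edge[OF assms(1,3) _ i] by simp
qed

lemma Eb_iff_R_of_Ob:
  assumes "x \<in> A" "u \<in> A" "\<not> sp x u" "(x, u) \<in> Ob"
  shows "(x, u) \<in> Eb \<longleftrightarrow> ((x, u) \<in> R) \<noteq> ((u, x) \<in> R)"
proof -
  have Ab: "x \<in> Ab" "u \<in> Ab" using assms subset by auto
  obtain i where i: "i < k" "sp (t i) x" using t_in_part[OF Ab(1)] by blast
  obtain j where j: "j < k" "sp (t j) u" using t_in_part[OF Ab(2)] by blast
  have t: "t i \<in> Ab" "t j \<in> Ab" using t_outside i(1) j(1) by blast+
  have "\<not> sp x (t j)" using sp_trans[OF Ab(1) t(2) Ab(2)] j(2) assms(3) by blast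
  have "(t i, t j) \<in> Ob"
    using Ob_parts[OF Ab(1) t(1) Ab(2) t(2) same_part_sym[OF i(2)] same_part_sym[OF j(2)] assms(3,4)] .
  moreover have "i \<noteq> j"
    using sp_trans[OF Ab(1) t(1) Ab(2)] same_part_sym[OF i(2)] j(2) assms(3) by blast
  ultimately have "i < j" using t_order Ob_facts(1,2) i(1) j(1) by (metis linorder_neqE_nat)
  then have "(t i, t j) \<in> Eb" using t_edges j(1) by blast
  moreover have "(x, t j) \<in> Eb \<longleftrightarrow> (t j, x) \<notin> Eb"
    using in_S_edge_iff_not_reverse[OF in_S_Ab \<open>\<not> sp x (t j)\<close>] .
  moreover have "((x, u) \<in> Eb) \<noteq> ((x, t j) \<in> Eb) \<longleftrightarrow> ((t i, u) \<in> Eb) \<noteq> ((t i, t j) \<in> Eb)"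
    using in_S_edge_parity[OF in_S_Ab Ab(1) t(1) Ab(2) t(2) same_part_sym[OF i(2)] same_part_sym[OF j(2)] assms(3)]
    by blast
  ultimately show ?thesis
    using R_iff_t_edge[OF assms(1-3) i] R_iff_t_edge[OF assms(2,1) _ j] same_part_sym assms(3) by blast
qed

end

sublocale Sstar_witness \<subseteq> Sstar_structure A E R Lt
proof
  show "in_S A E" by (rule in_S)
  show "strict_linorder_on A Lt"
    unfolding strict_linorder_on_def Lt_eq using Ob_facts subset by blast
  show "(x', y') \<in> Lt" if "x \<in> A" "x' \<in> A" "y \<in> A" "y' \<in> A" "same_part E x x'"
    "same_part E y y'" "\<not> same_part E x y" "(x, y) \<in> Lt" for x x' y y'
    using that Ob_parts[of x x' y y'] same_part_iff subset unfolding Lt_eq by blast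
  show "x \<in> A \<and> u \<in> A \<and> \<not> same_part E x u" if "(x, u) \<in> R" for x u
    using that same_part_iff unfolding R_eq by blast
  show "(x, u) \<in> R \<longleftrightarrow> (x', u) \<in> R" if "x \<in> A" "x' \<in> A" "same_part E x x'" for x x' u
  proof -
    have Ab: "x \<in> Ab" "x' \<in> Ab" and xx': "sp x x'" using that subset same_part_iff by auto
    have "sp x w \<longleftrightarrow> sp x' w" if "w \<in> Ab" for w
      using sp_trans[OF Ab(2,1) that] sp_trans[OF Ab that] same_part_sym[OF xx'] xx' by blast
    moreover have "sp (t i) x \<longleftrightarrow> sp (t i) x'" if "i < k" for i
      using that t_outside sp_trans[OF _ Ab] sp_trans[OF _ Ab(2,1)] xx' same_part_sym[OF xx'] by blast
    ultimately show ?thesis using that(1,2) subset unfolding R_eq by auto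
  qed
  show "((x, u) \<in> R) \<noteq> ((x, u') \<in> R) \<longleftrightarrow> ((x, u) \<in> E) \<noteq> ((x, u') \<in> E)"
    if "x \<in> A" "u \<in> A" "u' \<in> A" "same_part E u u'" "\<not> same_part E x u" for x u u'
    using R_parity_Eb[of x u u'] that same_part_iff unfolding E_eq by auto
  show "(x, u) \<in> E \<longleftrightarrow> ((x, u) \<in> Lt \<longleftrightarrow> ((x, u) \<in> R) \<noteq> ((u, x) \<in> R))"
    if "x \<in> A" "u \<in> A" "\<not> same_part E x u" for x u
  proof -
    have xu: "\<not> sp x u" "\<not> sp u x" using that same_part_iff same_part_sym by blast+
    have "x \<noteq> u" using xu by auto
    moreover have "x \<in> Ab" "u \<in> Ab" using that(1,2) subset by auto
    ultimately consider "(x, u) \<in> Ob" | "(u, x) \<in> Ob" using Ob_facts(3) by blast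
    then show ?thesis
    proof cases
      case 1
      then show ?thesis using Eb_iff_R_of_Ob[OF that(1,2) xu(1)] that Ob_facts unfolding E_eq Lt_eq by auto
    next
      case 2
      then have "(x, u) \<notin> Ob" using Ob_facts(1,2) by blast
      then show ?thesis
        using Eb_iff_R_of_Ob[OF that(2,1) xu(2) 2] in_S_edge_iff_not_reverse[OF in_S_Ab xu(1)] that
        unfolding E_eq Lt_eq by auto
    qed
  qed
qed

lemma in_Sstar_imp_Sstar_structure:
  assumes "in_Sstar A E R Lt"
  shows "Sstar_structure A E R Lt"
proof -
  have "\<exists>Ab Eb t Ob. Sstar_witness A E R Lt Ab Eb t Ob (card (parts A E))"
    using assms unfolding in_Sstar_def Let_def Sstar_witness_def
    by (elim conjE exE) (intro exI conjI; assumption)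
  then obtain Ab Eb t Ob where "Sstar_witness A E R Lt Ab Eb t Ob (card (parts A E))" by blast
  then interpret Sstar_witness A E R Lt Ab Eb t Ob "card (parts A E)" .
  show ?thesis by unfold_locales
qed

section \<open>The universal structure\<close>

text \<open>Vertices are pairs \<open>(p, W)\<close>, encoded as natural numbers because the structures live on \<open>nat\<close>.\<close>

definition vertex :: "nat \<Rightarrow> nat set \<Rightarrow> nat" where
  "vertex p W = prod_encode (p, set_encode W)"

definition vpart :: "nat \<Rightarrow> nat" where
  "vpart u = fst (prod_decode u)"

definition vlabel :: "nat \<Rightarrow> nat set" where
  "vlabel u = set_decode (snd (prod_decode u))"

lemma vpart_vertex [simp]: "vpart (vertex p W) = p"
  by (simp add: vpart_def vertex_def)

lemma vlabel_vertex [simp]: "finite W \<Longrightarrow> vlabel (vertex p W) = W"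
  by (simp add: vlabel_def vertex_def)

lemma vertex_eq_iff: "finite W \<Longrightarrow> finite V \<Longrightarrow> vertex p W = vertex q V \<longleftrightarrow> p = q \<and> W = V"
  by (metis vpart_vertex vlabel_vertex)

definition univ_V :: "nat \<Rightarrow> nat set" where
  "univ_V N = (\<lambda>(p, W). vertex p W) ` ({..<N} \<times> Pow {..<N})"

text \<open>The label \<open>W\<close> of a vertex flips its edges towards part \<open>q\<close> exactly when \<open>q \<in> W\<close>; the parity
  condition says precisely that the edges between two parts follow such a pattern.\<close>

definition univ_edge :: "nat \<Rightarrow> nat set \<Rightarrow> nat \<Rightarrow> nat set \<Rightarrow> bool" where
  "univ_edge p W q V \<longleftrightarrow> p \<noteq> q \<and> ((p < q) \<longleftrightarrow> ((q \<in> W) \<longleftrightarrow> (p \<in> V)))"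

definition univ_E :: "nat \<Rightarrow> (nat \<times> nat) set" where
  "univ_E N = {(u, v). u \<in> univ_V N \<and> v \<in> univ_V N \<and> univ_edge (vpart u) (vlabel u) (vpart v) (vlabel v)}"

lemma vertex_in_univ_V: "p < N \<Longrightarrow> W \<subseteq> {..<N} \<Longrightarrow> vertex p W \<in> univ_V N"
  by (auto simp: univ_V_def)

lemma univ_VE:
  assumes "u \<in> univ_V N"
  obtains "vpart u < N" "vlabel u \<subseteq> {..<N}" "u = vertex (vpart u) (vlabel u)"
proof -
  obtain p W where "p < N" "W \<subseteq> {..<N}" "u = vertex p W" using assms by (auto simp: univ_V_def)
  moreover have "finite W" using \<open>W \<subseteq> {..<N}\<close> finite_subset by blast
  ultimately show ?thesis using that by simp
qed

lemma same_part_univ: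
  "u \<in> univ_V N \<Longrightarrow> v \<in> univ_V N \<Longrightarrow> same_part (univ_E N) u v \<longleftrightarrow> vpart u = vpart v"
  by (auto simp: same_part_def univ_E_def univ_edge_def elim: univ_VE)

lemma univ_edge_parity:
  "p \<noteq> q \<Longrightarrow> even (of_bool (univ_edge p W q V) + of_bool (univ_edge p W q V') +
     of_bool (univ_edge p W' q V) + of_bool (univ_edge p W' q V') :: nat)"
  unfolding univ_edge_def
  by (cases "p < q"; cases "q \<in> W"; cases "q \<in> W'"; cases "p \<in> V"; cases "p \<in> V'") simp_all

lemma in_S_univ: "in_S (univ_V N) (univ_E N)"
proof -
  have prel: "part_rel (univ_V N) (univ_E N) = {(u, v). u \<in> univ_V N \<and> v \<in> univ_V N \<and> vpart u = vpart v}"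
    using same_part_univ by (auto simp: part_rel_def)
  then have equiv: "equiv (univ_V N) (part_rel (univ_V N) (univ_E N))"
    by (auto intro!: equivI simp: refl_on_def sym_def trans_def)
  have "parity_ok (univ_V N) (univ_E N)"
    unfolding parity_ok_def
  proof (intro ballI impI)
    fix P P' u v x y
    assume P: "P \<in> parts (univ_V N) (univ_E N)" "P' \<in> parts (univ_V N) (univ_E N)" "P \<noteq> P'"
      and uvxy: "u \<in> P" "v \<in> P" "x \<in> P'" "y \<in> P'" "u \<noteq> v" "x \<noteq> y"
    obtain z where z: "P = {w \<in> univ_V N. vpart z = vpart w}"
      using P(1) unfolding parts_def prel by (auto elim!: quotientE)
    obtain z' where z': "P' = {w \<in> univ_V N. vpart z' = vpart w}"
      using P(2) unfolding parts_def prel by (auto elim!: quotientE)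
    have parts: "vpart v = vpart u" "vpart y = vpart x" "vpart u \<noteq> vpart x"
      and V: "u \<in> univ_V N" "v \<in> univ_V N" "x \<in> univ_V N" "y \<in> univ_V N"
      using uvxy P(3) unfolding z z' by auto
    show "even (card {(a, b). a \<in> {u, v} \<and> b \<in> {x, y} \<and> (a, b) \<in> univ_E N})"
      unfolding card_edges_between_pairs[OF uvxy(5,6)] univ_E_def
      using univ_edge_parity[OF parts(3)] V parts by simp
  qed
  moreover have "digraph (univ_V N) (univ_E N)"
    by (auto simp: digraph_def univ_E_def univ_edge_def)
  ultimately show ?thesis
    using equiv by (simp add: in_S_def complete_multipartite_def univ_V_def)
qed

section \<open>Embedding into expansions of the universal structure\<close>

definition part_min :: "nat set \<Rightarrow> (nat \<times> nat) set \<Rightarrow> nat \<Rightarrow> nat" where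
  "part_min A E x = Min {y \<in> A. same_part E x y}"

lemma part_min_in_part:
  assumes "in_S A E" "x \<in> A"
  shows "part_min A E x \<in> A" "same_part E x (part_min A E x)"
proof -
  have "finite A" using assms(1) by (simp add: in_S_def)
  then have "part_min A E x \<in> {y \<in> A. same_part E x y}"
    unfolding part_min_def using assms(2) by (intro Min_in) auto
  then show "part_min A E x \<in> A" "same_part E x (part_min A E x)" by auto
qed

lemma part_min_eq_iff:
  assumes "in_S A E" "x \<in> A" "y \<in> A"
  shows "part_min A E x = part_min A E y \<longleftrightarrow> same_part E x y"
proof
  assume "part_min A E x = part_min A E y"
  then show "same_part E x y"
    using part_min_in_part[OF assms(1,2)] part_min_in_part[OF assms(1,3)] same_part_sym
      in_S_same_part_trans[OF assms(1)] assms(2,3) by metis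
next
  assume xy: "same_part E x y"
  have "same_part E x z \<longleftrightarrow> same_part E y z" if "z \<in> A" for z
    using in_S_same_part_trans[OF assms(1)] assms(2,3) that xy same_part_sym by metis
  then show "part_min A E x = part_min A E y" unfolding part_min_def by (metis (lifting))
qed

context Sstar_structure
begin

lemma finite_A: "finite A"
  using in_S by (simp add: in_S_def)

lemma Lt_linear_on: "X \<subseteq> A \<Longrightarrow> strict_linear_order_on X Lt"
  using strict_linear_order_on_subset strict_linorder_on_imp_strict_linear_order_on order by blast

lemma Lt_total: "x \<in> A \<Longrightarrow> y \<in> A \<Longrightarrow> x \<noteq> y \<Longrightarrow> (x, y) \<in> Lt \<or> (y, x) \<in> Lt"
  using order by (simp add: strict_linorder_on_def)

lemma order_part_min_iff:
  assumes "x \<in> A" "y \<in> A" "\<not> same_part E x y"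
  shows "(part_min A E x, part_min A E y) \<in> Lt \<longleftrightarrow> (x, y) \<in> Lt"
proof -
  note mx = part_min_in_part[OF in_S assms(1)] and my = part_min_in_part[OF in_S assms(2)]
  have "\<not> same_part E (part_min A E x) (part_min A E y)"
    using in_S_same_part_trans[OF in_S] mx my assms same_part_sym by metis
  then show ?thesis
    using order_parts[OF assms(1) mx(1) assms(2) my(1) mx(2) my(2) assms(3)]
      order_parts[OF mx(1) assms(1) my(1) assms(2) same_part_sym[OF mx(2)] same_part_sym[OF my(2)]]
    by blast
qed

definition part_pos :: "nat \<Rightarrow> nat" where
  "part_pos x = order_rank Lt {y \<in> A. same_part E x y} x"

lemma part_pos_less_iff:
  assumes "x \<in> A" "y \<in> A" "same_part E x y"
  shows "part_pos x < part_pos y \<longleftrightarrow> (x, y) \<in> Lt"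
proof -
  have "{z \<in> A. same_part E y z} = {z \<in> A. same_part E x z}"
    using in_S_same_part_trans[OF in_S] assms same_part_sym by metis
  then show ?thesis
    unfolding part_pos_def using order_rank_less_iff[OF _ Lt_linear_on, of "{z \<in> A. same_part E x z}" x y]
      finite_A assms by auto
qed

lemma part_pos_inject:
  "x \<in> A \<Longrightarrow> y \<in> A \<Longrightarrow> same_part E x y \<Longrightarrow> part_pos x = part_pos y \<Longrightarrow> x = y"
  using part_pos_less_iff Lt_total same_part_sym by (metis less_irrefl)

lemma part_pos_less_card: "x \<in> A \<Longrightarrow> part_pos x < card A"
proof -
  assume "x \<in> A"
  then have "part_pos x < card {y \<in> A. same_part E x y}"
    unfolding part_pos_def using bij_betw_order_rank[OF _ Lt_linear_on, of "{y \<in> A. same_part E x y}"]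
      finite_A by (auto simp: bij_betw_def)
  also have "\<dots> \<le> card A" using finite_A by (intro card_mono) auto
  finally show ?thesis .
qed

end

definition label_rank :: "nat \<Rightarrow> (nat \<times> nat) set \<Rightarrow> nat \<Rightarrow> nat set \<Rightarrow> nat" where
  "label_rank N Lt q = order_rank (inv_image Lt (vertex q)) (Pow {..<N})"

locale Sstar_univ = Sstar_structure "univ_V N" "univ_E N" R Lt for N R Lt
begin

lemma label_order:
  assumes "q < N"
  shows "strict_linear_order_on (Pow {..<N}) (inv_image Lt (vertex q))"
proof (rule strict_linear_order_on_inv_image)
  show "strict_linear_order_on (vertex q ` Pow {..<N}) Lt"
    using assms by (intro Lt_linear_on) (auto intro: vertex_in_univ_V)
  show "inj_on (vertex q) (Pow {..<N})"
    by (auto intro!: inj_onI simp: vertex_eq_iff finite_subset)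
qed

lemma bij_label_rank: "q < N \<Longrightarrow> bij_betw (label_rank N Lt q) (Pow {..<N}) {..<2 ^ N}"
  using bij_betw_order_rank[OF _ label_order] by (simp add: label_rank_def card_Pow)

lemma label_rank_less_iff:
  "q < N \<Longrightarrow> W \<subseteq> {..<N} \<Longrightarrow> W' \<subseteq> {..<N} \<Longrightarrow>
    label_rank N Lt q W < label_rank N Lt q W' \<longleftrightarrow> (vertex q W, vertex q W') \<in> Lt"
  using order_rank_less_iff[OF _ label_order] by (simp add: label_rank_def)

lemma same_part_vertex:
  "p < N \<Longrightarrow> q < N \<Longrightarrow> W \<subseteq> {..<N} \<Longrightarrow> V \<subseteq> {..<N} \<Longrightarrow>
    same_part (univ_E N) (vertex p W) (vertex q V) \<longleftrightarrow> p = q"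
  by (simp add: same_part_univ vertex_in_univ_V)

lemma R_flip_label:
  assumes "p < N" "q < N" "p \<noteq> q" "W0 \<subseteq> {..<N}" "W \<subseteq> {..<N}"
  shows "(vertex p W0, vertex q W) \<in> R \<longleftrightarrow> ((vertex p W0, vertex q {}) \<in> R) \<noteq> (p \<in> W)"
proof -
  have V: "vertex p W0 \<in> univ_V N" "vertex q W \<in> univ_V N" "vertex q {} \<in> univ_V N"
    using assms by (auto intro: vertex_in_univ_V)
  have fin: "finite W0" "finite W" using assms(4,5) finite_subset by blast+
  have "((vertex p W0, vertex q W) \<in> R) \<noteq> ((vertex p W0, vertex q {}) \<in> R) \<longleftrightarrow>
      ((vertex p W0, vertex q W) \<in> univ_E N) \<noteq> ((vertex p W0, vertex q {}) \<in> univ_E N)"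
    using R_parity[OF V] same_part_vertex assms by simp
  also have "\<dots> \<longleftrightarrow> p \<in> W"
    using V fin assms(3) by (auto simp: univ_E_def univ_edge_def)
  finally show ?thesis by blast
qed

end

lemma div_eq_less_iff:
  fixes a b d :: nat
  shows "a div d = i \<Longrightarrow> b div d = j \<Longrightarrow> i \<noteq> j \<Longrightarrow> a < b \<longleftrightarrow> i < j"
  by (metis div_le_mono le_less not_le)

locale Sstar_embedding =
  A: Sstar_structure A E R Lt + B: Sstar_univ N R' Lt'
  for A E R Lt N R' Lt' +
  fixes e :: nat and C :: "nat set"
  assumes card_A_less: "card A < 2 ^ e" and e_le_N: "e \<le> N" and C_subset: "C \<subseteq> {..<N}"
    and card_C: "card C = card (part_min A E ` A)"
    and C_shattered: "\<And>q l. q \<in> C \<Longrightarrow> l < 2 ^ e \<Longrightarrow>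
      shatters (rank_block N e (label_rank N Lt' q) l) (C - {q})"
begin

lemma exists_part_iso:
  "\<exists>f. bij_betw f (part_min A E ` A) C \<and> (\<forall>r \<in> part_min A E ` A. \<forall>r' \<in> part_min A E ` A.
     (vertex (f r) {}, vertex (f r') {}) \<in> Lt' \<longleftrightarrow> (r, r') \<in> Lt)"
proof -
  have reps: "finite (part_min A E ` A)" "strict_linear_order_on (part_min A E ` A) Lt"
    using A.finite_A part_min_in_part[OF A.in_S] by (auto intro!: A.Lt_linear_on)
  have "strict_linear_order_on ((\<lambda>q. vertex q {}) ` C) Lt'"
    using C_subset by (intro B.Lt_linear_on) (auto intro: vertex_in_univ_V)
  moreover have "inj_on (\<lambda>q. vertex q {}) C" by (auto intro!: inj_onI simp: vertex_eq_iff)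
  ultimately have "strict_linear_order_on C (inv_image Lt' (\<lambda>q. vertex q {}))"
    by (rule strict_linear_order_on_inv_image)
  moreover have "finite C" using C_subset finite_subset by blast
  ultimately obtain f where "bij_betw f (part_min A E ` A) C"
    "\<And>r r'. r \<in> part_min A E ` A \<Longrightarrow> r' \<in> part_min A E ` A \<Longrightarrow>
      (f r, f r') \<in> inv_image Lt' (\<lambda>q. vertex q {}) \<longleftrightarrow> (r, r') \<in> Lt"
    using finite_linear_orders_isomorphic[OF reps _ _ card_C[symmetric]] by blast
  then show ?thesis by (intro exI[of _ f]) simp
qed

definition part_iso :: "nat \<Rightarrow> nat" where
  "part_iso = (SOME f. bij_betw f (part_min A E ` A) C \<and> (\<forall>r \<in> part_min A E ` A. \<forall>r' \<in> part_min A E ` A.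
     (vertex (f r) {}, vertex (f r') {}) \<in> Lt' \<longleftrightarrow> (r, r') \<in> Lt))"

lemma part_iso:
  "bij_betw part_iso (part_min A E ` A) C"
  "r \<in> part_min A E ` A \<Longrightarrow> r' \<in> part_min A E ` A \<Longrightarrow>
    (vertex (part_iso r) {}, vertex (part_iso r') {}) \<in> Lt' \<longleftrightarrow> (r, r') \<in> Lt"
  using someI_ex[OF exists_part_iso] unfolding part_iso_def by blast+

definition index :: "nat \<Rightarrow> nat" where
  "index x = part_iso (part_min A E x)"

lemma index_in_C: "x \<in> A \<Longrightarrow> index x \<in> C"
  using part_iso(1) by (auto simp: index_def bij_betw_def)

lemma index_less: "x \<in> A \<Longrightarrow> index x < N"
  using index_in_C C_subset by blast

lemma index_eq_iff: "x \<in> A \<Longrightarrow> y \<in> A \<Longrightarrow> index x = index y \<longleftrightarrow> same_part E x y"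
  using inj_on_eq_iff[OF bij_betw_imp_inj_on[OF part_iso(1)]] part_min_eq_iff[OF A.in_S]
  by (simp add: index_def)

lemma index_order:
  "x \<in> A \<Longrightarrow> y \<in> A \<Longrightarrow> \<not> same_part E x y \<Longrightarrow>
    (vertex (index x) {}, vertex (index y) {}) \<in> Lt' \<longleftrightarrow> (x, y) \<in> Lt"
  unfolding index_def using part_iso(2)[OF imageI imageI] A.order_part_min_iff by simp

definition rep_of :: "nat \<Rightarrow> nat" where
  "rep_of q = inv_into (part_min A E ` A) part_iso q"

lemma rep_of: "q \<in> C \<Longrightarrow> rep_of q \<in> A \<and> index (rep_of q) = q"
proof -
  assume "q \<in> C"
  then have "q \<in> part_iso ` part_min A E ` A" using part_iso(1) by (simp add: bij_betw_def)
  then have "rep_of q \<in> part_min A E ` A" "part_iso (rep_of q) = q"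
    unfolding rep_of_def by (auto intro: inv_into_into f_inv_into_f)
  moreover obtain x where x: "x \<in> A" "rep_of q = part_min A E x" using calculation(1) by blast
  moreover note m = part_min_in_part[OF A.in_S x(1)]
  moreover have "part_min A E (part_min A E x) = part_min A E x"
    using part_min_eq_iff[OF A.in_S m(1) x(1)] same_part_sym[OF m(2)] by simp
  ultimately show ?thesis by (simp add: index_def)
qed

text \<open>The label of \<open>x\<close> is read off from the edge pattern of \<open>R\<close> towards \<open>x\<close>, corrected by the
  corresponding pattern of \<open>R'\<close> between the unlabelled vertices; its rank among the labels of its
  part must lie in the block numbered by the position of \<open>x\<close> in its part. Shattering guarantees
  that such a label exists.\<close>

definition target :: "nat \<Rightarrow> nat set" where
  "target x = {q \<in> C - {index x}. ((vertex q {}, vertex (index x) {}) \<in> R') \<noteq> ((rep_of q, x) \<in> R)}"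

definition label :: "nat \<Rightarrow> nat set" where
  "label x = (SOME W. W \<in> rank_block N e (label_rank N Lt' (index x)) (A.part_pos x) \<and>
    W \<inter> (C - {index x}) = target x)"

lemma label:
  assumes "x \<in> A"
  shows "label x \<subseteq> {..<N}" "label_rank N Lt' (index x) (label x) div 2 ^ (N - e) = A.part_pos x"
    "label x \<inter> (C - {index x}) = target x"
proof -
  have "A.part_pos x < 2 ^ e" using A.part_pos_less_card[OF assms] card_A_less by linarith
  then have "shatters (rank_block N e (label_rank N Lt' (index x)) (A.part_pos x)) (C - {index x})"
    using C_shattered index_in_C[OF assms] by blast
  moreover have "target x \<subseteq> C - {index x}" unfolding target_def by blast
  ultimately have "\<exists>W. W \<in> rank_block N e (label_rank N Lt' (index x)) (A.part_pos x) \<and>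
      W \<inter> (C - {index x}) = target x"
    unfolding shatters_def by blast
  from someI_ex[OF this] show "label x \<subseteq> {..<N}"
    "label_rank N Lt' (index x) (label x) div 2 ^ (N - e) = A.part_pos x"
    "label x \<inter> (C - {index x}) = target x"
    unfolding label_def rank_block_def by auto
qed

definition emb :: "nat \<Rightarrow> nat" where
  "emb x = vertex (index x) (label x)"

lemma emb_in_univ_V: "x \<in> A \<Longrightarrow> emb x \<in> univ_V N"
  unfolding emb_def using index_less label(1) by (rule vertex_in_univ_V)

lemma same_part_emb:
  "x \<in> A \<Longrightarrow> y \<in> A \<Longrightarrow> same_part (univ_E N) (emb x) (emb y) \<longleftrightarrow> same_part E x y"
  unfolding emb_def using B.same_part_vertex index_less label(1) index_eq_iff by simp

lemma same_part_emb_base: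
  "x \<in> A \<Longrightarrow> same_part (univ_E N) (emb x) (vertex (index x) {})"
  unfolding emb_def using B.same_part_vertex index_less label(1) by simp

lemma emb_order: "x \<in> A \<Longrightarrow> y \<in> A \<Longrightarrow> (emb x, emb y) \<in> Lt' \<longleftrightarrow> (x, y) \<in> Lt"
proof (cases "same_part E x y")
  case True
  assume xy: "x \<in> A" "y \<in> A"
  have q: "index y = index x" using index_eq_iff[OF xy] True by simp
  have "(emb x, emb y) \<in> Lt' \<longleftrightarrow>
      label_rank N Lt' (index x) (label x) < label_rank N Lt' (index x) (label y)"
    unfolding emb_def q using B.label_rank_less_iff[OF index_less[OF xy(1)] label(1)[OF xy(1)] label(1)[OF xy(2)]]
    by simp
  also have "\<dots> \<longleftrightarrow> A.part_pos x < A.part_pos y"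
  proof (cases "x = y")
    case False
    then have "A.part_pos x \<noteq> A.part_pos y" using A.part_pos_inject xy True by blast
    then show ?thesis using div_eq_less_iff label(2)[OF xy(1)] label(2)[OF xy(2)] q by metis
  qed simp
  also have "\<dots> \<longleftrightarrow> (x, y) \<in> Lt" by (rule A.part_pos_less_iff[OF xy True])
  finally show ?thesis .
next
  case False
  assume xy: "x \<in> A" "y \<in> A"
  have V: "emb x \<in> univ_V N" "emb y \<in> univ_V N" "vertex (index x) {} \<in> univ_V N" "vertex (index y) {} \<in> univ_V N"
    using emb_in_univ_V index_less xy by (auto intro: vertex_in_univ_V)
  have sp: "same_part (univ_E N) (emb x) (vertex (index x) {})" "same_part (univ_E N) (emb y) (vertex (index y) {})"
    using same_part_emb_base xy by auto
  have "\<not> same_part (univ_E N) (emb x) (emb y)" using same_part_emb[OF xy] False by simp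
  moreover have "\<not> same_part (univ_E N) (vertex (index x) {}) (vertex (index y) {})"
    using B.same_part_vertex index_less index_eq_iff xy False by simp
  ultimately have "(emb x, emb y) \<in> Lt' \<longleftrightarrow> (vertex (index x) {}, vertex (index y) {}) \<in> Lt'"
    using B.order_parts[OF V(1,3,2,4) sp] B.order_parts[OF V(3,1,4,2) same_part_sym[OF sp(1)] same_part_sym[OF sp(2)]]
    by blast
  then show ?thesis using index_order[OF xy False] by simp
qed

lemma emb_R: "x \<in> A \<Longrightarrow> y \<in> A \<Longrightarrow> (emb x, emb y) \<in> R' \<longleftrightarrow> (x, y) \<in> R"
proof (cases "same_part E x y")
  case True
  assume xy: "x \<in> A" "y \<in> A"
  then show ?thesis using A.R_subset B.R_subset same_part_emb[OF xy] True by blast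
next
  case False
  assume xy: "x \<in> A" "y \<in> A"
  define p q where "p = index x" and "q = index y"
  have pq: "p < N" "q < N" "p \<noteq> q" "p \<in> C - {q}"
    using index_less index_in_C index_eq_iff xy False unfolding p_def q_def by auto
  have V: "emb x \<in> univ_V N" "vertex p {} \<in> univ_V N" using emb_in_univ_V xy pq by (auto intro: vertex_in_univ_V)
  have "(emb x, emb y) \<in> R' \<longleftrightarrow> (vertex p {}, emb y) \<in> R'"
    using B.R_source_part[OF V] same_part_emb_base[OF xy(1)] unfolding p_def by blast
  also have "\<dots> \<longleftrightarrow> ((vertex p {}, vertex q {}) \<in> R') \<noteq> (p \<in> label y)"
    unfolding emb_def q_def[symmetric] using B.R_flip_label[OF pq(1-3) _ label(1)[OF xy(2)]] by simp
  also have "p \<in> label y \<longleftrightarrow> p \<in> target y" using label(3)[OF xy(2)] pq(4) unfolding q_def by blast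
  also have "\<dots> \<longleftrightarrow> ((vertex p {}, vertex q {}) \<in> R') \<noteq> ((rep_of p, y) \<in> R)"
    using pq(4) unfolding target_def q_def by simp
  also have "(rep_of p, y) \<in> R \<longleftrightarrow> (x, y) \<in> R"
    using A.R_source_part[of "rep_of p" x] rep_of[of p] index_eq_iff[of "rep_of p" x] xy pq(4)
    unfolding p_def by auto
  finally show ?thesis by blast
qed

lemma emb_E: "x \<in> A \<Longrightarrow> y \<in> A \<Longrightarrow> (emb x, emb y) \<in> univ_E N \<longleftrightarrow> (x, y) \<in> E"
proof (cases "same_part E x y")
  case True
  assume xy: "x \<in> A" "y \<in> A"
  then show ?thesis
    using in_S_edge_not_same_part[OF A.in_S] in_S_edge_not_same_part[OF in_S_univ] same_part_emb True by blast
next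
  case False
  assume xy: "x \<in> A" "y \<in> A"
  then have "\<not> same_part (univ_E N) (emb x) (emb y)" using same_part_emb False by simp
  then show ?thesis
    using B.E_iff_order_R[OF emb_in_univ_V emb_in_univ_V] A.E_iff_order_R[OF xy False] xy
      emb_order emb_R by simp
qed

lemma inj_on_emb: "inj_on emb A"
proof (rule inj_onI)
  fix x y assume xy: "x \<in> A" "y \<in> A" "emb x = emb y"
  then have "index x = index y" "label x = label y"
    using vertex_eq_iff[OF finite_subset[OF label(1)] finite_subset[OF label(1)]] unfolding emb_def
    by (metis finite_lessThan)+
  then show "x = y"
    using A.part_pos_inject[OF xy(1,2)] index_eq_iff[OF xy(1,2)] label(2)[OF xy(1)] label(2)[OF xy(2)] by metis
qed

lemma embeds_star: "embeds_star A E R Lt (univ_V N) (univ_E N) R' Lt'"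
  unfolding embeds_star_def using emb_in_univ_V inj_on_emb emb_E emb_R emb_order
  by (intro exI[of _ emb]) auto

end

theorem mainTheorem20:
  shows "Sstar_expansion_property"
  unfolding Sstar_expansion_property_def
proof (intro allI impI)
  fix A E assume "in_S A E"
  obtain N where "card A \<le> N" and shattered: "\<forall>g :: nat \<Rightarrow> nat set \<Rightarrow> nat.
      (\<forall>q < N. bij_betw (g q) (Pow {..<N}) {..<2 ^ N}) \<longrightarrow> (\<exists>C \<subseteq> {..<N}. card C = card (part_min A E ` A) \<and>
        (\<forall>q \<in> C. \<forall>l < 2 ^ card A. shatters (rank_block N (card A) (g q) l) (C - {q})))"
    using exists_set_shattered_by_blocks[of "card A" "card (part_min A E ` A)"] by blast
  show "\<exists>B F. in_S B F \<and> (\<forall>R Lt R' Lt'. in_Sstar A E R Lt \<longrightarrow> in_Sstar B F R' Lt' \<longrightarrow>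
      embeds_star A E R Lt B F R' Lt')"
  proof (intro exI[of _ "univ_V N"] exI[of _ "univ_E N"] conjI allI impI)
    fix R Lt R' Lt' assume "in_Sstar A E R Lt" "in_Sstar (univ_V N) (univ_E N) R' Lt'"
    then interpret A: Sstar_structure A E R Lt + B: Sstar_univ N R' Lt'
      by (simp_all add: in_Sstar_imp_Sstar_structure Sstar_univ_def)
    have "\<forall>q < N. bij_betw (label_rank N Lt' q) (Pow {..<N}) {..<2 ^ N}" using B.bij_label_rank by blast
    then obtain C where "C \<subseteq> {..<N}" "card C = card (part_min A E ` A)"
      "\<And>q l. q \<in> C \<Longrightarrow> l < 2 ^ card A \<Longrightarrow> shatters (rank_block N (card A) (label_rank N Lt' q) l) (C - {q})"
      using shattered[THEN spec, of "label_rank N Lt'"] by blast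
    then interpret Sstar_embedding A E R Lt N R' Lt' "card A" C
      using \<open>card A \<le> N\<close> by unfold_locales simp_all
    show "embeds_star A E R Lt (univ_V N) (univ_E N) R' Lt'" by (rule embeds_star)
  qed (rule in_S_univ)
qed

end
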